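(* For all $k,\Delta,\delta,n$: (a) $n^*_H(k,\Delta,\delta)\le n^*_M(k,\Delta,\delta)$; (b) if $n^*_H(k,\Delta,\delta)\le n$ then $n^*_M\big(k',2\Delta,\delta+\binom{k'}{\Delta}(1-\frac{\Delta}{k'})^k\big)\le n$ for every $k'\in\mathbb{N}$; (c) if $n^*_P(k,\Delta,\delta)\le n$ then $n^*_M(k,\Delta,\delta+(e/4)^n)\le2n$; (d) if $n^*_M(k,\Delta,\delta)\le n$ then $n^*_P(k,\Delta,\delta+(2/e)^n)\le2n$; (e) if $n^*_B(k,\Delta,\delta)\le n$ then $n^*_H(k,\Delta,\delta+(e/4)^n)\le2n$; (f) if $n^*_H(k,\Delta,\delta)\le n$ then $n^*_B(k,\Delta,\delta+(2/e)^n)\le2n$.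
   Context: Consider an urn of $k$ colored balls with $C$ distinct colors and four sampling models: multinomial (a fixed number of balls drawn uniformly with replacement), hypergeometric (a fixed number drawn uniformly without replacement), Bernoulli (each ball observed independently with a fixed probability $p$, so the sample size is $\mathrm{Binom}(k,p)$), and Poisson (the sample size is $\mathrm{Poi}(\lambda)$ and, given the size, balls are drawn uniformly with replacement). $n^*_M(k,\Delta,\delta)$, $n^*_H(k,\Delta,\delta)$, $n^*_B(k,\Delta,\delta)$, $n^*_P(k,\Delta,\delta)$ denote the minimum expected sample size under the multinomial, hypergeometric, Bernoulli and Poisson model respectively such that there exists an estimator $\hat C$ with $\mathbb{P}[|\hat C-C|\ge\Delta]\le\delta$ for every urn of $k$ balls. *)

theory Defs
  imports "HOL-Probability.Probability"
begin

text \<open>An urn of k balls is a list of colours of length k (colours are natural numbers).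
  An observation is the multiset of colours of the sampled balls.
  Estimators may be randomized: they map an observation to a distribution of reals.\<close>

definition num_colors :: "nat list \<Rightarrow> nat" where
  "num_colors xs = card (set xs)"

primrec multinomial_sample :: "nat list \<Rightarrow> nat \<Rightarrow> nat multiset pmf" where
  "multinomial_sample xs 0 = return_pmf {#}"
| "multinomial_sample xs (Suc m) =
     (if xs = [] then return_pmf {#}
      else bind_pmf (pmf_of_set {..<length xs}) (\<lambda>i.
           bind_pmf (multinomial_sample xs m) (\<lambda>S. return_pmf (add_mset (xs ! i) S))))"

text \<open>Hypergeometric: m balls drawn uniformly without replacement (used only for m \<le> length xs).\<close>
definition hypergeometric_sample :: "nat list \<Rightarrow> nat \<Rightarrow> nat multiset pmf" where
  "hypergeometric_sample xs m =
     map_pmf (\<lambda>S. image_mset (\<lambda>i. xs ! i) (mset_set S))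
       (pmf_of_set {S. S \<subseteq> {..<length xs} \<and> card S = m})"

primrec bernoulli_sample :: "nat list \<Rightarrow> real \<Rightarrow> nat multiset pmf" where
  "bernoulli_sample [] p = return_pmf {#}"
| "bernoulli_sample (x # xs) p =
     bind_pmf (bernoulli_pmf p) (\<lambda>b.
       bind_pmf (bernoulli_sample xs p) (\<lambda>S. return_pmf (if b then add_mset x S else S)))"

text \<open>Poisson(lambda) distribution, with Poi(0) the point mass at 0.\<close>
definition poi :: "real \<Rightarrow> nat pmf" where
  "poi l = (if 0 < l then poisson_pmf l else return_pmf 0)"

definition poisson_sample :: "nat list \<Rightarrow> real \<Rightarrow> nat multiset pmf" where
  "poisson_sample xs l = bind_pmf (poi l) (\<lambda>N. multinomial_sample xs N)"

definition admits_estimator ::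
  "(nat list \<Rightarrow> nat multiset pmf) \<Rightarrow> nat \<Rightarrow> nat \<Rightarrow> real \<Rightarrow> bool" where
  "admits_estimator samp k \<Delta> \<delta> \<longleftrightarrow>
     (\<exists>est :: nat multiset \<Rightarrow> real pmf. \<forall>xs. length xs = k \<longrightarrow>
        measure_pmf.prob (bind_pmf (samp xs) est)
          {c. \<bar>c - real (num_colors xs)\<bar> \<ge> real \<Delta>} \<le> \<delta>)"

text \<open>Minimum expected sample sizes (infimum; \<infinity> if infeasible).\<close>
definition nstar_M :: "nat \<Rightarrow> nat \<Rightarrow> real \<Rightarrow> ereal" where
  "nstar_M k \<Delta> \<delta> =
     (INF m \<in> {m::nat. admits_estimator (\<lambda>xs. multinomial_sample xs m) k \<Delta> \<delta>}. ereal (real m))"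

definition nstar_H :: "nat \<Rightarrow> nat \<Rightarrow> real \<Rightarrow> ereal" where
  "nstar_H k \<Delta> \<delta> =
     (INF m \<in> {m::nat. m \<le> k \<and> admits_estimator (\<lambda>xs. hypergeometric_sample xs m) k \<Delta> \<delta>}.
        ereal (real m))"

definition nstar_B :: "nat \<Rightarrow> nat \<Rightarrow> real \<Rightarrow> ereal" where
  "nstar_B k \<Delta> \<delta> =
     (INF p \<in> {p::real. 0 \<le> p \<and> p \<le> 1 \<and> admits_estimator (\<lambda>xs. bernoulli_sample xs p) k \<Delta> \<delta>}.
        ereal (real k * p))"

definition nstar_P :: "nat \<Rightarrow> nat \<Rightarrow> real \<Rightarrow> ereal" where
  "nstar_P k \<Delta> \<delta> =
     (INF l \<in> {l::real. 0 \<le> l \<and> admits_estimator (\<lambda>xs. poisson_sample xs l) k \<Delta> \<delta>}. ereal l)"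

end

theory Submission
  imports Defs "HOL-Combinatorics.List_Permutation" "HOL-Combinatorics.Multiset_Permutations"
begin

text \<open>Every inequality comes from a simulation: using fresh randomness, a sample from one model
  is turned into a sample from another model, or into a failure flag, and the estimator for the
  other model is run on the result; its error probability grows by the failure probability.

  \<^item> Listing a sample of size \<open>N\<close> in uniformly random order and keeping the first \<open>m\<close> entries
    turns a multinomial (hypergeometric) sample of size \<open>N \<ge> m\<close> into one of size \<open>m\<close>. The
    Poisson (Bernoulli) model is the mixture of the multinomial (hypergeometric) model over a
    Poisson (binomial) sample size, so (c)--(f) reduce to Chernoff bounds for that size at the
    thresholds \<open>\<lfloor>2 n\<rfloor> + 1\<close> and \<open>n\<close>.
  \<^item> (a): writing the \<open>m\<close> distinct balls of a hypergeometric sample into the occurrence pattern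
    of an independent uniform word of length \<open>m\<close> over \<open>k\<close> letters gives a multinomial sample.
  \<^item> (b): a multinomial sample from an urn of \<open>k'\<close> balls is a hypergeometric sample from the
    random urn of \<open>k\<close> balls drawn with replacement from it. That urn misses \<open>\<Delta>\<close> colours with
    probability at most \<open>(k' choose \<Delta>) (1 - \<Delta> / k')^k\<close>, and otherwise an estimate within
    \<open>\<Delta>\<close> of its colour count is within \<open>2 \<Delta>\<close> of that of the original urn.\<close>

lemma map_pmf_of_set_uniform_fibres:
  assumes "finite A" "A \<noteq> {}" "f ` A = B" "\<And>b. b \<in> B \<Longrightarrow> card {a\<in>A. f a = b} = c"
  shows "map_pmf f (pmf_of_set A) = pmf_of_set B"
proof (rule pmf_eqI)
  fix b
  have fin_B: "finite B" using assms by auto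
  have card_A: "card A = c * card B"
  proof -
    have "A = (\<Union>b\<in>B. {a\<in>A. f a = b})" using assms(3) by auto
    hence "card A = (\<Sum>b\<in>B. card {a\<in>A. f a = b})"
      by (subst card_UN_disjoint[symmetric]) (use assms(1) fin_B in auto)
    also have "\<dots> = (\<Sum>b\<in>B. c)" using assms(4) by simp
    finally show ?thesis by simp
  qed
  have "B \<noteq> {}" using assms by auto
  have "c > 0" using card_A assms card_gt_0_iff by (metis mult_is_0 neq0_conv)
  have "pmf (map_pmf f (pmf_of_set A)) b = measure (pmf_of_set A) (f -` {b})"
    by (simp add: pmf_map)
  also have "\<dots> = card (A \<inter> f -` {b}) / card A" using assms by (simp add: measure_pmf_of_set)
  also have "A \<inter> f -` {b} = {a\<in>A. f a = b}" by auto
  finally have pmf_map: "pmf (map_pmf f (pmf_of_set A)) b = card {a\<in>A. f a = b} / card A" .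
  show "pmf (map_pmf f (pmf_of_set A)) b = pmf (pmf_of_set B) b"
  proof (cases "b \<in> B")
    case True
    thus ?thesis using pmf_map assms(4)[OF True] card_A \<open>c > 0\<close> \<open>B \<noteq> {}\<close> fin_B
      by (simp add: indicator_def)
  next
    case False
    hence "{a\<in>A. f a = b} = {}" using assms(3) by auto
    hence "card {a\<in>A. f a = b} = 0" by (simp only: card.empty)
    thus ?thesis using pmf_map False \<open>B \<noteq> {}\<close> fin_B by (simp add: indicator_def)
  qed
qed

lemma pair_pmf_of_set:
  assumes "finite A" "A \<noteq> {}" "finite B" "B \<noteq> {}"
  shows "pair_pmf (pmf_of_set A) (pmf_of_set B) = pmf_of_set (A \<times> B)"
  by (rule pmf_eqI)
     (use assms in \<open>auto simp: pmf_pair indicator_def card_cartesian_product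
        pmf_of_set[OF assms(2,1)] pmf_of_set[OF assms(4,3)]\<close>)

lemma card_take_fibre:
  assumes "length q = m" "\<And>l. P l \<Longrightarrow> m \<le> length l"
  shows "card {l. P l \<and> take m l = q} = card {r. P (q @ r)}"
proof -
  have "bij_betw (\<lambda>r. q @ r) {r. P (q @ r)} {l. P l \<and> take m l = q}"
  proof (rule bij_betwI[where g="drop m"])
    show "(@) q \<in> {r. P (q @ r)} \<rightarrow> {l. P l \<and> take m l = q}" using assms(1) by auto
    show "drop m \<in> {l. P l \<and> take m l = q} \<rightarrow> {r. P (q @ r)}"
      by (intro Pi_I) (metis (mono_tags, lifting) append_take_drop_id mem_Collect_eq)
    show "drop m (q @ x) = x" for x using assms(1) by simp
    show "q @ drop m y = y" if "y \<in> {l. P l \<and> take m l = q}" for y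
      using that by (metis (mono_tags, lifting) append_take_drop_id mem_Collect_eq)
  qed
  thus ?thesis by (simp add: bij_betw_same_card)
qed

section \<open>Samples as images of random index lists\<close>

definition index_lists :: "nat \<Rightarrow> nat \<Rightarrow> nat list set" where
  "index_lists k m = {l. set l \<subseteq> {..<k} \<and> length l = m}"

definition distinct_index_lists :: "nat \<Rightarrow> nat \<Rightarrow> nat list set" where
  "distinct_index_lists k m = {l. length l = m \<and> distinct l \<and> set l \<subseteq> {..<k}}"

lemma finite_index_lists [simp]: "finite (index_lists k m)"
  unfolding index_lists_def by (rule finite_lists_length_eq) simp

lemma card_index_lists: "card (index_lists k m) = k ^ m"
  unfolding index_lists_def by (subst card_lists_length_eq) auto

lemma index_lists_not_empty: "k > 0 \<Longrightarrow> index_lists k m \<noteq> {}"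
proof -
  assume "k > 0"
  hence "replicate m 0 \<in> index_lists k m" by (auto simp: index_lists_def)
  thus ?thesis by auto
qed

lemma set_pmf_index_lists [simp]: "k > 0 \<Longrightarrow> set_pmf (pmf_of_set (index_lists k m)) = index_lists k m"
  using index_lists_not_empty by simp

lemma finite_distinct_index_lists [simp]: "finite (distinct_index_lists k m)"
  by (rule finite_subset[OF _ finite_index_lists[of k m]])
     (auto simp: distinct_index_lists_def index_lists_def)

lemma distinct_index_lists_not_empty: "m \<le> k \<Longrightarrow> distinct_index_lists k m \<noteq> {}"
proof -
  assume "m \<le> k"
  hence "[0..<m] \<in> distinct_index_lists k m" by (auto simp: distinct_index_lists_def)
  thus ?thesis by auto
qed

lemma set_pmf_distinct_index_lists [simp]:
  "m \<le> k \<Longrightarrow> set_pmf (pmf_of_set (distinct_index_lists k m)) = distinct_index_lists k m"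
  using distinct_index_lists_not_empty by simp

lemma card_distinct_index_lists: "m \<le> k \<Longrightarrow> card (distinct_index_lists k m) = \<Prod>{k - m + 1 .. k}"
  unfolding distinct_index_lists_def using card_lists_distinct_length_eq[of "{..<k}" m] by simp

lemma index_lists_Suc_bij:
  "bij_betw (\<lambda>(i,l). i # l) ({..<k} \<times> index_lists k m) (index_lists k (Suc m))"
  by (rule bij_betwI'[where ?f="\<lambda>(i,l). i # l"]) (auto simp: index_lists_def length_Suc_conv)

lemma multinomial_sample_eq_index_lists:
  assumes "xs \<noteq> []"
  shows "multinomial_sample xs m
    = map_pmf (\<lambda>l. mset (map ((!) xs) l)) (pmf_of_set (index_lists (length xs) m))"
proof (induction m)
  case 0
  have "index_lists (length xs) 0 = {[]}" by (auto simp: index_lists_def)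
  thus ?case by (simp add: pmf_of_set_singleton)
next
  case (Suc m)
  let ?k = "length xs"
  have "?k > 0" using assms by simp
  note ne = index_lists_not_empty[OF \<open>?k > 0\<close>]
  have "pmf_of_set (index_lists ?k (Suc m))
      = map_pmf (\<lambda>(i,l). i # l) (pmf_of_set ({..<?k} \<times> index_lists ?k m))"
    by (rule map_pmf_of_set_bij_betw[symmetric]) (use index_lists_Suc_bij ne \<open>?k > 0\<close> in auto)
  also have "pmf_of_set ({..<?k} \<times> index_lists ?k m)
      = pair_pmf (pmf_of_set {..<?k}) (pmf_of_set (index_lists ?k m))"
    by (rule pair_pmf_of_set[symmetric]) (use ne \<open>?k > 0\<close> in auto)
  finally show ?case using assms
    by (simp add: Suc.IH pair_pmf_def map_bind_pmf bind_map_pmf map_pmf_def[symmetric]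
        pmf.map_comp o_def)
qed

lemma hypergeometric_sample_eq_distinct_index_lists:
  assumes "m \<le> length xs"
  shows "hypergeometric_sample xs m
    = map_pmf (\<lambda>l. mset (map ((!) xs) l)) (pmf_of_set (distinct_index_lists (length xs) m))"
proof -
  let ?k = "length xs"
  let ?Sub = "{S. S \<subseteq> {..<?k} \<and> card S = m}"
  have "map_pmf set (pmf_of_set (distinct_index_lists ?k m)) = pmf_of_set ?Sub"
  proof (rule map_pmf_of_set_uniform_fibres[where c="fact m"])
    show "set ` distinct_index_lists ?k m = ?Sub"
    proof
      show "set ` distinct_index_lists ?k m \<subseteq> ?Sub"
        by (auto simp: distinct_index_lists_def distinct_card)
      show "?Sub \<subseteq> set ` distinct_index_lists ?k m"
      proof
        fix S assume S: "S \<in> ?Sub"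
        hence "finite S" using finite_subset by blast
        hence "S = set (sorted_list_of_set S)" "sorted_list_of_set S \<in> distinct_index_lists ?k m"
          using S by (auto simp: distinct_index_lists_def)
        thus "S \<in> set ` distinct_index_lists ?k m" by blast
      qed
    qed
    fix S assume S: "S \<in> ?Sub"
    hence "finite S" using finite_subset by blast
    have "{l \<in> distinct_index_lists ?k m. set l = S} = permutations_of_set S"
      using S by (auto simp: distinct_index_lists_def permutations_of_set_def distinct_card)
    thus "card {l \<in> distinct_index_lists ?k m. set l = S} = fact m" using S \<open>finite S\<close> by simp
  qed (use distinct_index_lists_not_empty[OF assms] in auto)
  hence "hypergeometric_sample xs m = map_pmf (\<lambda>S. image_mset ((!) xs) (mset_set S))
      (map_pmf set (pmf_of_set (distinct_index_lists ?k m)))"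
    unfolding hypergeometric_sample_def by simp
  also have "\<dots> = map_pmf (\<lambda>l. mset (map ((!) xs) l)) (pmf_of_set (distinct_index_lists ?k m))"
    unfolding pmf.map_comp o_def
    by (rule map_pmf_cong)
       (use distinct_index_lists_not_empty[OF assms] in \<open>auto simp: mset_set_set mset_map
          distinct_index_lists_def[symmetric]\<close>, auto simp: distinct_index_lists_def mset_set_set)
  finally show ?thesis .
qed

lemma size_multinomial_sample:
  assumes "xs \<noteq> []" "S \<in> set_pmf (multinomial_sample xs N)"
  shows "size S = N"
proof -
  have "set_pmf (pmf_of_set (index_lists (length xs) N)) = index_lists (length xs) N"
    using assms(1) by simp
  thus ?thesis using assms by (auto simp: multinomial_sample_eq_index_lists index_lists_def)
qed

lemma size_hypergeometric_sample:
  assumes "N \<le> length xs" "S \<in> set_pmf (hypergeometric_sample xs N)"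
  shows "size S = N"
proof -
  have "set_pmf (pmf_of_set (distinct_index_lists (length xs) N)) = distinct_index_lists (length xs) N"
    using assms(1) by simp
  thus ?thesis using assms
    by (auto simp: hypergeometric_sample_eq_distinct_index_lists distinct_index_lists_def)
qed

lemma hypergeometric_sample_all: "hypergeometric_sample xs (length xs) = return_pmf (mset xs)"
proof -
  have "{S. S \<subseteq> {..<length xs} \<and> card S = length xs} = {{..<length xs}}"
  proof (intro set_eqI iffI)
    fix S assume "S \<in> {S. S \<subseteq> {..<length xs} \<and> card S = length xs}"
    thus "S \<in> {{..<length xs}}" using card_subset_eq[of "{..<length xs}" S] by auto
  qed auto
  moreover have "image_mset ((!) xs) (mset_set {..<length xs}) = mset xs"
  proof -
    have "mset_set {..<length xs} = mset [0..<length xs]" by (simp add: mset_upt atLeast0LessThan)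
    thus ?thesis by (metis mset_map map_nth)
  qed
  ultimately show ?thesis by (simp add: hypergeometric_sample_def pmf_of_set_singleton)
qed

lemma samples_of_empty_urn:
  "multinomial_sample [] m = return_pmf {#}"
  "hypergeometric_sample [] 0 = return_pmf {#}"
  "bernoulli_sample [] p = return_pmf {#}"
  "poisson_sample [] l = return_pmf {#}"
proof -
  show multinomial: "multinomial_sample [] m = return_pmf {#}" for m by (cases m) auto
  show "hypergeometric_sample [] 0 = return_pmf {#}" using hypergeometric_sample_all[of "[]"] by simp
  show "bernoulli_sample [] p = return_pmf {#}" by simp
  show "poisson_sample [] l = return_pmf {#}" by (simp add: poisson_sample_def multinomial)
qed

section \<open>Random reordering and thinning of samples\<close>

definition uniform_permutation :: "nat \<Rightarrow> (nat \<Rightarrow> nat) pmf" where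
  "uniform_permutation N = pmf_of_set {p. p permutes {..<N}}"

lemma set_pmf_uniform_permutation [simp]:
  "set_pmf (uniform_permutation N) = {p. p permutes {..<N}}"
proof -
  have "finite {p. p permutes {..<N}}" using finite_permutations[of "{..<N}"] by simp
  moreover have "{p. p permutes {..<N}} \<noteq> {}" using permutes_id by blast
  ultimately show ?thesis by (simp add: uniform_permutation_def)
qed

definition shuffle :: "(nat list \<Rightarrow> 'b pmf) \<Rightarrow> nat multiset \<Rightarrow> 'b pmf" where
  "shuffle G M =
     bind_pmf (uniform_permutation (size M)) (\<lambda>p. G (permute_list p (sorted_list_of_multiset M)))"

definition subsample :: "nat \<Rightarrow> nat multiset \<Rightarrow> nat multiset pmf" where
  "subsample m = shuffle (\<lambda>c. return_pmf (mset (take m c)))"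

lemma permute_list_inv_cancel:
  assumes "p permutes {..<length l}"
  shows "permute_list (inv p) (permute_list p l) = l"
    and "permute_list p (permute_list (inv p) l) = l"
proof -
  have "permute_list (inv p) (permute_list p l) = permute_list (p \<circ> inv p) l"
    by (rule permute_list_compose[symmetric]) (use permutes_inv[OF assms] in simp)
  thus "permute_list (inv p) (permute_list p l) = l" by (simp add: permutes_inv_o[OF assms])
  have "permute_list p (permute_list (inv p) l) = permute_list (inv p \<circ> p) l"
    by (rule permute_list_compose[symmetric]) (use assms in simp)
  thus "permute_list p (permute_list (inv p) l) = l" by (simp add: permutes_inv_o[OF assms])
qed

lemma map_pmf_compose_uniform_permutation:
  assumes "t permutes {..<N}"
  shows "map_pmf (\<lambda>p. t \<circ> p) (uniform_permutation N) = uniform_permutation N"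
  unfolding uniform_permutation_def
proof (rule map_pmf_of_set_bij_betw)
  show "bij_betw ((\<circ>) t) {p. p permutes {..<N}} {p. p permutes {..<N}}"
  proof (rule bij_betwI[where g="\<lambda>p. inv t \<circ> p"])
    show "(\<circ>) t \<in> {p. p permutes {..<N}} \<rightarrow> {p. p permutes {..<N}}"
      using assms by (auto intro: permutes_compose)
    show "(\<lambda>p. inv t \<circ> p) \<in> {p. p permutes {..<N}} \<rightarrow> {p. p permutes {..<N}}"
      using permutes_inv[OF assms] by (auto intro: permutes_compose)
    show "inv t \<circ> (t \<circ> x) = x" for x
      by (simp add: comp_assoc[symmetric] permutes_inv_o[OF assms])
    show "t \<circ> (inv t \<circ> y) = y" for y
      by (simp add: comp_assoc[symmetric] permutes_inv_o[OF assms])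
  qed
qed (simp_all add: finite_permutations, metis permutes_id)

lemma map_pmf_permute_list_pmf_of_set:
  assumes fin: "finite A" and ne: "A \<noteq> {}" and len: "\<And>l. l \<in> A \<Longrightarrow> length l = N"
    and closed: "\<And>l p. l \<in> A \<Longrightarrow> p permutes {..<N} \<Longrightarrow> permute_list p l \<in> A"
    and p: "p permutes {..<N}"
  shows "map_pmf (permute_list p) (pmf_of_set A) = pmf_of_set A"
proof (rule map_pmf_of_set_bij_betw[OF _ ne fin])
  show "bij_betw (permute_list p) A A"
  proof (rule bij_betwI[where g="permute_list (inv p)"])
    show "permute_list p \<in> A \<rightarrow> A" using closed p by auto
    show "permute_list (inv p) \<in> A \<rightarrow> A" using closed permutes_inv[OF p] by auto
    show "permute_list (inv p) (permute_list p x) = x" if "x \<in> A" for x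
      using permute_list_inv_cancel(1)[of p x] p len[OF that] by simp
    show "permute_list p (permute_list (inv p) y) = y" if "y \<in> A" for y
      using permute_list_inv_cancel(2)[of p y] p len[OF that] by simp
  qed
qed

lemma shuffle_mset:
  assumes "length c = N"
  shows "shuffle G (mset c) = bind_pmf (uniform_permutation N) (\<lambda>p. G (permute_list p c))"
proof -
  have "mset (sorted_list_of_multiset (mset c)) = mset c" by simp
  then obtain t where t: "t permutes {..<length c}" "permute_list t c = sorted_list_of_multiset (mset c)"
    using mset_eq_permutation by metis
  have "shuffle G (mset c)
      = bind_pmf (uniform_permutation N) (\<lambda>p. G (permute_list p (permute_list t c)))"
    unfolding shuffle_def using assms t by simp
  also have "\<dots> = bind_pmf (uniform_permutation N) (\<lambda>p. G (permute_list (t \<circ> p) c))"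
    by (rule bind_pmf_cong[OF refl]) (use assms in \<open>auto simp: permute_list_compose\<close>)
  also have "\<dots> = bind_pmf (map_pmf (\<lambda>p. t \<circ> p) (uniform_permutation N)) (\<lambda>p. G (permute_list p c))"
    by (simp add: bind_map_pmf)
  also have "\<dots> = bind_pmf (uniform_permutation N) (\<lambda>p. G (permute_list p c))"
    using map_pmf_compose_uniform_permutation t(1) assms by simp
  finally show ?thesis .
qed

text \<open>If the list of drawn indices is exchangeable, shuffling the observed multiset recovers
  the distribution of the ordered list of drawn balls.\<close>

lemma bind_shuffle_exchangeable:
  assumes fin: "finite A" and ne: "A \<noteq> {}" and len: "\<And>l. l \<in> A \<Longrightarrow> length l = N"
    and closed: "\<And>l p. l \<in> A \<Longrightarrow> p permutes {..<N} \<Longrightarrow> permute_list p l \<in> A"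
  shows "bind_pmf (map_pmf (\<lambda>l. mset (map ((!) xs) l)) (pmf_of_set A)) (shuffle G)
       = bind_pmf (pmf_of_set A) (\<lambda>l. G (map ((!) xs) l))"
proof -
  have "bind_pmf (map_pmf (\<lambda>l. mset (map ((!) xs) l)) (pmf_of_set A)) (shuffle G)
      = bind_pmf (pmf_of_set A)
          (\<lambda>l. bind_pmf (uniform_permutation N) (\<lambda>p. G (permute_list p (map ((!) xs) l))))"
    unfolding bind_map_pmf
  proof (rule bind_pmf_cong[OF refl])
    fix l assume "l \<in> set_pmf (pmf_of_set A)"
    hence "length (map ((!) xs) l) = N" using fin ne len by simp
    thus "shuffle G (mset (map ((!) xs) l))
        = bind_pmf (uniform_permutation N) (\<lambda>p. G (permute_list p (map ((!) xs) l)))"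
      by (rule shuffle_mset)
  qed
  also have "\<dots> = bind_pmf (pmf_of_set A)
          (\<lambda>l. bind_pmf (uniform_permutation N) (\<lambda>p. G (map ((!) xs) (permute_list p l))))"
    by (intro bind_pmf_cong refl) (use fin ne len in \<open>auto simp: permute_list_map\<close>)
  also have "\<dots> = bind_pmf (uniform_permutation N)
          (\<lambda>p. bind_pmf (map_pmf (permute_list p) (pmf_of_set A)) (\<lambda>l. G (map ((!) xs) l)))"
    by (subst bind_commute_pmf) (simp add: bind_map_pmf)
  also have "\<dots> = bind_pmf (pmf_of_set A) (\<lambda>l. G (map ((!) xs) l))"
    by (subst bind_pmf_cong[OF refl, where g="\<lambda>_. bind_pmf (pmf_of_set A) (\<lambda>l. G (map ((!) xs) l))"])
       (simp_all add: map_pmf_permute_list_pmf_of_set[OF fin ne len closed])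
  finally show ?thesis .
qed

lemma map_take_index_lists:
  assumes "m \<le> N" "k > 0"
  shows "map_pmf (take m) (pmf_of_set (index_lists k N)) = pmf_of_set (index_lists k m)"
proof (rule map_pmf_of_set_uniform_fibres[where c="k ^ (N - m)"])
  show "take m ` index_lists k N = index_lists k m"
  proof
    show "take m ` index_lists k N \<subseteq> index_lists k m" using assms
      by (auto simp: index_lists_def dest: in_set_takeD)
    show "index_lists k m \<subseteq> take m ` index_lists k N"
    proof
      fix q assume q: "q \<in> index_lists k m"
      have "q @ replicate (N - m) 0 \<in> index_lists k N" using q assms by (auto simp: index_lists_def)
      moreover have "take m (q @ replicate (N - m) 0) = q" using q by (simp add: index_lists_def)
      ultimately show "q \<in> take m ` index_lists k N" by force
    qed
  qed
  fix q assume q: "q \<in> index_lists k m"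
  have "card {l. l \<in> index_lists k N \<and> take m l = q} = card {r. q @ r \<in> index_lists k N}"
    by (rule card_take_fibre) (use q assms in \<open>auto simp: index_lists_def\<close>)
  also have "{r. q @ r \<in> index_lists k N} = index_lists k (N - m)"
    using q assms by (auto simp: index_lists_def)
  finally show "card {l \<in> index_lists k N. take m l = q} = k ^ (N - m)" by (simp add: card_index_lists)
qed (use index_lists_not_empty[OF assms(2)] in auto)

lemma map_take_distinct_index_lists:
  assumes "m \<le> N" "N \<le> k"
  shows "map_pmf (take m) (pmf_of_set (distinct_index_lists k N)) = pmf_of_set (distinct_index_lists k m)"
proof (rule map_pmf_of_set_uniform_fibres[where c="\<Prod>{(k - m) - (N - m) + 1 .. k - m}"])
  have extension: "{r. q @ r \<in> distinct_index_lists k N}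
      = {r. length r = N - m \<and> distinct r \<and> set r \<subseteq> {..<k} - set q}"
    and card_rest: "card ({..<k} - set q) = k - m"
    if "q \<in> distinct_index_lists k m" for q
    using that assms by (auto simp: distinct_index_lists_def card_Diff_subset distinct_card)
  show "take m ` distinct_index_lists k N = distinct_index_lists k m"
  proof
    show "take m ` distinct_index_lists k N \<subseteq> distinct_index_lists k m" using assms
      by (auto simp: distinct_index_lists_def dest: in_set_takeD)
    show "distinct_index_lists k m \<subseteq> take m ` distinct_index_lists k N"
    proof
      fix q assume q: "q \<in> distinct_index_lists k m"
      define r where "r = take (N - m) (sorted_list_of_set ({..<k} - set q))"
      have "length r = N - m \<and> distinct r \<and> set r \<subseteq> {..<k} - set q"
        unfolding r_def using card_rest[OF q] assms by (auto dest: in_set_takeD)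
      hence "q @ r \<in> distinct_index_lists k N" using extension[OF q] by blast
      moreover have "take m (q @ r) = q" using q by (simp add: distinct_index_lists_def)
      ultimately show "q \<in> take m ` distinct_index_lists k N" by force
    qed
  qed
  fix q assume q: "q \<in> distinct_index_lists k m"
  have "card {l. l \<in> distinct_index_lists k N \<and> take m l = q} = card {r. q @ r \<in> distinct_index_lists k N}"
    by (rule card_take_fibre) (use q assms in \<open>auto simp: distinct_index_lists_def\<close>)
  also have "\<dots> = \<Prod>{(k - m) - (N - m) + 1 .. k - m}"
    unfolding extension[OF q]
    using card_lists_distinct_length_eq[of "{..<k} - set q" "N - m"] card_rest[OF q] assms by simp
  finally show "card {l \<in> distinct_index_lists k N. take m l = q} = \<Prod>{(k - m) - (N - m) + 1 .. k - m}"
    by simp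
qed (use distinct_index_lists_not_empty assms in auto)

lemma multinomial_subsample:
  assumes "xs \<noteq> []" "m \<le> N"
  shows "bind_pmf (multinomial_sample xs N) (subsample m) = multinomial_sample xs m"
proof -
  let ?k = "length xs"
  have "?k > 0" using assms by simp
  have "bind_pmf (multinomial_sample xs N) (subsample m)
      = bind_pmf (pmf_of_set (index_lists ?k N)) (\<lambda>l. return_pmf (mset (take m (map ((!) xs) l))))"
    unfolding multinomial_sample_eq_index_lists[OF assms(1)] subsample_def
    by (rule bind_shuffle_exchangeable)
       (use index_lists_not_empty[OF \<open>?k > 0\<close>] finite_index_lists[of ?k N]
         in \<open>auto simp: index_lists_def\<close>)
  also have "\<dots> = map_pmf (\<lambda>l. mset (map ((!) xs) l)) (map_pmf (take m) (pmf_of_set (index_lists ?k N)))"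
    by (simp add: map_pmf_def bind_assoc_pmf bind_return_pmf take_map)
  also have "\<dots> = multinomial_sample xs m"
    by (simp add: map_take_index_lists assms \<open>?k > 0\<close> multinomial_sample_eq_index_lists[OF assms(1)])
  finally show ?thesis .
qed

lemma hypergeometric_subsample:
  assumes "m \<le> N" "N \<le> length xs"
  shows "bind_pmf (hypergeometric_sample xs N) (subsample m) = hypergeometric_sample xs m"
proof -
  let ?k = "length xs"
  have "bind_pmf (hypergeometric_sample xs N) (subsample m)
      = bind_pmf (pmf_of_set (distinct_index_lists ?k N))
          (\<lambda>l. return_pmf (mset (take m (map ((!) xs) l))))"
    unfolding hypergeometric_sample_eq_distinct_index_lists[OF assms(2)] subsample_def
    by (rule bind_shuffle_exchangeable)
       (use distinct_index_lists_not_empty[OF assms(2)] finite_distinct_index_lists[of ?k N]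
         in \<open>auto simp: distinct_index_lists_def\<close>)
  also have "\<dots> = map_pmf (\<lambda>l. mset (map ((!) xs) l))
      (map_pmf (take m) (pmf_of_set (distinct_index_lists ?k N)))"
    by (simp add: map_pmf_def bind_assoc_pmf bind_return_pmf take_map)
  also have "\<dots> = hypergeometric_sample xs m"
    using assms by (simp add: map_take_distinct_index_lists hypergeometric_sample_eq_distinct_index_lists)
  finally show ?thesis .
qed

section \<open>Sampling with replacement from a sample without replacement\<close>

primrec first_index :: "'a list \<Rightarrow> 'a \<Rightarrow> nat" where
  "first_index [] x = 0"
| "first_index (y # ys) x = (if x = y then 0 else Suc (first_index ys x))"

lemma first_index_less_length: "x \<in> set r \<Longrightarrow> first_index r x < length r"
  by (induction r) auto

lemma nth_first_index: "x \<in> set r \<Longrightarrow> r ! first_index r x = x"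
  by (induction r) auto

lemma first_index_nth: "distinct r \<Longrightarrow> i < length r \<Longrightarrow> first_index r (r ! i) = i"
  by (induction r arbitrary: i) (auto simp: nth_Cons split: nat.splits)

lemma first_index_map: "inj_on f (set r) \<Longrightarrow> x \<in> set r \<Longrightarrow> first_index (map f r) (f x) = first_index r x"
  by (induction r) (auto simp: inj_on_def)

lemma inj_on_first_index: "inj_on (first_index r) (set r)"
  by (rule inj_onI) (metis nth_first_index)

lemma map_first_index_self: "distinct r \<Longrightarrow> map (first_index r) r = [0..<length r]"
  by (rule nth_equalityI) (auto simp: first_index_nth)

lemma remdups_map_inj_on: "inj_on f (set l) \<Longrightarrow> remdups (map f l) = map f (remdups l)"
  by (induction l) (auto simp: inj_on_def)

text \<open>The occurrence pattern of a list replaces every entry by the rank of its first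
  occurrence among the distinct entries; e.g. \<open>[c, a, c, b]\<close> has pattern \<open>[0, 1, 0, 2]\<close>.\<close>

definition pattern :: "'a list \<Rightarrow> nat list" where
  "pattern l = map (first_index (remdups l)) l"

lemma length_pattern [simp]: "length (pattern l) = length l"
  by (simp add: pattern_def)

lemma map_nth_remdups_pattern: "map ((!) (remdups l)) (pattern l) = l"
  by (rule nth_equalityI) (auto simp: pattern_def nth_first_index)

lemma pattern_map_inj_on: "inj_on f (set l) \<Longrightarrow> pattern (map f l) = pattern l"
  unfolding pattern_def by (simp add: remdups_map_inj_on first_index_map)

lemma set_pattern: "set (pattern l) \<subseteq> {..<length (remdups l)}"
  by (auto simp: pattern_def intro!: first_index_less_length)

lemma pattern_pattern [simp]: "pattern (pattern l) = pattern l"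
proof -
  have "pattern (map (first_index (remdups l)) l) = pattern l"
    by (rule pattern_map_inj_on) (rule inj_on_subset[OF inj_on_first_index], simp)
  thus ?thesis by (simp only: pattern_def[of l])
qed

lemma remdups_pattern: "remdups (pattern l) = [0..<length (remdups l)]"
proof -
  have "remdups (pattern l) = map (first_index (remdups l)) (remdups l)"
    unfolding pattern_def
    by (rule remdups_map_inj_on) (rule inj_on_subset[OF inj_on_first_index], simp)
  thus ?thesis by (simp add: map_first_index_self)
qed

lemma inj_on_nth_set_pattern:
  assumes "length (remdups l) \<le> length q" "distinct q"
  shows "inj_on ((!) q) (set (pattern l))"
  by (rule inj_on_subset[of _ "{..<length q}"])
     (use assms set_pattern[of l] in \<open>auto simp: inj_on_def nth_eq_iff_index_eq\<close>)

lemma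
  assumes "length q = length (remdups l)" "distinct q"
  shows remdups_map_nth_pattern: "remdups (map ((!) q) (pattern l)) = q"
    and pattern_map_nth_pattern: "pattern (map ((!) q) (pattern l)) = pattern l"
  using assms
  by (simp_all add: remdups_map_inj_on pattern_map_inj_on inj_on_nth_set_pattern remdups_pattern
      map_nth flip: assms(1))

definition relabel_pattern :: "nat list \<times> nat list \<Rightarrow> nat list" where
  "relabel_pattern = (\<lambda>(j, D). map ((!) D) (pattern j))"

lemma relabel_pattern_eq_iff:
  assumes "length j = m" "length D = m" "distinct D"
  shows "relabel_pattern (j, D) = l
    \<longleftrightarrow> pattern j = pattern l \<and> take (length (remdups l)) D = remdups l"
proof
  assume relabel: "relabel_pattern (j, D) = l"
  have j_distinct: "length (remdups j) \<le> m" using assms(1) length_remdups_leq by metis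
  have inj: "inj_on ((!) D) (set (pattern j))"
    by (rule inj_on_nth_set_pattern) (use assms j_distinct in auto)
  have l: "l = map ((!) D) (pattern j)" using relabel by (simp add: relabel_pattern_def)
  have "pattern j = pattern l" unfolding l by (simp add: pattern_map_inj_on[OF inj])
  moreover have "remdups l = take (length (remdups j)) D"
  proof -
    have "remdups l = map ((!) D) [0..<length (remdups j)]"
      unfolding l by (simp add: remdups_map_inj_on[OF inj] remdups_pattern)
    also have "\<dots> = take (length (remdups j)) D"
      using j_distinct assms(2) by (metis map_nth take_map take_upt min_absorb1 add_0 length_map)
    finally show ?thesis .
  qed
  ultimately show "pattern j = pattern l \<and> take (length (remdups l)) D = remdups l"
    using j_distinct assms(2) by simp
next
  assume "pattern j = pattern l \<and> take (length (remdups l)) D = remdups l"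
  hence p: "pattern j = pattern l" and t: "take (length (remdups l)) D = remdups l" by auto
  have "relabel_pattern (j, D) = map ((!) D) (pattern l)" by (simp add: relabel_pattern_def p)
  also have "\<dots> = map ((!) (take (length (remdups l)) D)) (pattern l)"
    using set_pattern[of l] by (intro map_cong refl) (auto simp: nth_take)
  also have "\<dots> = l" by (simp add: t map_nth_remdups_pattern)
  finally show "relabel_pattern (j, D) = l" .
qed

lemma card_same_pattern:
  assumes "l \<in> index_lists k m"
  shows "card {j \<in> index_lists k m. pattern j = pattern l}
    = card (distinct_index_lists k (length (remdups l)))"
proof -
  let ?d = "length (remdups l)"
  have "bij_betw (\<lambda>q. map ((!) q) (pattern l)) (distinct_index_lists k ?d)
      {j \<in> index_lists k m. pattern j = pattern l}"
  proof (rule bij_betwI[where g=remdups])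
    show "(\<lambda>q. map ((!) q) (pattern l))
        \<in> distinct_index_lists k ?d \<rightarrow> {j \<in> index_lists k m. pattern j = pattern l}"
    proof
      fix q assume q: "q \<in> distinct_index_lists k ?d"
      have "set (map ((!) q) (pattern l)) \<subseteq> {..<k}"
        using q set_pattern[of l] by (auto simp: distinct_index_lists_def)
          (metis lessThan_iff nth_mem subsetD)
      thus "map ((!) q) (pattern l) \<in> {j \<in> index_lists k m. pattern j = pattern l}"
        using q assms pattern_map_nth_pattern[of q l]
        by (auto simp: distinct_index_lists_def index_lists_def)
    qed
    show "remdups \<in> {j \<in> index_lists k m. pattern j = pattern l} \<rightarrow> distinct_index_lists k ?d"
    proof
      fix j assume j: "j \<in> {j \<in> index_lists k m. pattern j = pattern l}"
      have "length (remdups j) = ?d"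
        using j remdups_pattern[of j] remdups_pattern[of l] by (metis (mono_tags) length_upt
          mem_Collect_eq minus_nat.diff_0)
      thus "remdups j \<in> distinct_index_lists k ?d"
        using j by (auto simp: distinct_index_lists_def index_lists_def)
    qed
    show "remdups (map ((!) q) (pattern l)) = q" if "q \<in> distinct_index_lists k ?d" for q
      using that remdups_map_nth_pattern[of q l] by (auto simp: distinct_index_lists_def)
    show "map ((!) (remdups j)) (pattern l) = j"
      if "j \<in> {j \<in> index_lists k m. pattern j = pattern l}" for j
      using that map_nth_remdups_pattern[of j] by auto
  qed
  thus ?thesis by (simp add: bij_betw_same_card)
qed

lemma card_distinct_index_lists_prefix:
  assumes "l \<in> index_lists k m" "m \<le> k"
  shows "card {D \<in> distinct_index_lists k m. take (length (remdups l)) D = remdups l}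
    = \<Prod>{(k - length (remdups l)) - (m - length (remdups l)) + 1 .. k - length (remdups l)}"
proof -
  let ?d = "length (remdups l)"
  have "?d \<le> m" using assms(1) length_remdups_leq[of l] by (simp add: index_lists_def)
  have sl: "set l \<subseteq> {..<k}" using assms by (simp add: index_lists_def)
  have "card {D. D \<in> distinct_index_lists k m \<and> take ?d D = remdups l}
      = card {r. remdups l @ r \<in> distinct_index_lists k m}"
    by (rule card_take_fibre) (use \<open>?d \<le> m\<close> in \<open>auto simp: distinct_index_lists_def\<close>)
  also have "{r. remdups l @ r \<in> distinct_index_lists k m}
      = {r. length r = m - ?d \<and> distinct r \<and> set r \<subseteq> {..<k} - set l}"
    using sl \<open>?d \<le> m\<close> by (auto simp: distinct_index_lists_def)
  also have "card \<dots> = \<Prod>{(k - ?d) - (m - ?d) + 1 .. k - ?d}"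
    using card_lists_distinct_length_eq[of "{..<k} - set l" "m - ?d"] sl assms \<open>?d \<le> m\<close>
    by (simp add: card_Diff_subset length_remdups_card_conv)
  finally show ?thesis by simp
qed

lemma prod_split_interval:
  assumes "d \<le> m" "m \<le> (k::nat)"
  shows "\<Prod>{k - d + 1 .. k} * \<Prod>{(k - d) - (m - d) + 1 .. k - d} = \<Prod>{k - m + 1 .. k}"
proof -
  have "{k - m + 1 .. k} = {k - m + 1 .. k - d} \<union> {k - d + 1 .. k}" using assms by auto
  moreover have "{k - m + 1 .. k - d} \<inter> {k - d + 1 .. k} = {}" by auto
  ultimately have "\<Prod>{k - m + 1 .. k} = \<Prod>{k - m + 1 .. k - d} * \<Prod>{k - d + 1 .. k}"
    by (simp add: prod.union_disjoint)
  moreover have "(k - d) - (m - d) = k - m" using assms by simp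
  ultimately show ?thesis by (simp add: mult.commute)
qed

lemma relabel_pattern_in_index_lists:
  assumes j: "j \<in> index_lists k m" and D: "D \<in> distinct_index_lists k m"
  shows "relabel_pattern (j, D) \<in> index_lists k m"
proof -
  have "length (remdups j) \<le> m" using j length_remdups_leq[of j] by (simp add: index_lists_def)
  hence "set (pattern j) \<subseteq> {..<length D}"
    using set_pattern[of j] D by (auto simp: distinct_index_lists_def)
  hence "set (relabel_pattern (j, D)) \<subseteq> {..<k}"
    using D by (auto simp: relabel_pattern_def distinct_index_lists_def)
      (metis lessThan_iff nth_mem subsetD)
  thus ?thesis using j by (simp add: index_lists_def relabel_pattern_def)
qed

text \<open>The pairs mapped to a word \<open>l\<close> with \<open>d\<close> distinct letters are the
  \<open>k (k - 1) \<cdots> (k - d + 1)\<close> words with the pattern of \<open>l\<close> times the \<open>(k - d) \<cdots> (k - m + 1)\<close>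
  letter lists starting with the distinct letters of \<open>l\<close>: their number does not depend on \<open>l\<close>.\<close>

lemma relabel_pattern_uniform:
  assumes "m \<le> k" "k > 0"
  shows "map_pmf relabel_pattern (pmf_of_set (index_lists k m \<times> distinct_index_lists k m))
    = pmf_of_set (index_lists k m)"
proof (rule map_pmf_of_set_uniform_fibres[where c="\<Prod>{k - m + 1 .. k}"])
  show "index_lists k m \<times> distinct_index_lists k m \<noteq> {}"
    using index_lists_not_empty[OF assms(2)] distinct_index_lists_not_empty[OF assms(1)] by auto
  have fibre: "{a \<in> index_lists k m \<times> distinct_index_lists k m. relabel_pattern a = l}
      = {j \<in> index_lists k m. pattern j = pattern l}
        \<times> {D \<in> distinct_index_lists k m. take (length (remdups l)) D = remdups l}" for l
    using relabel_pattern_eq_iff by (auto simp: index_lists_def distinct_index_lists_def)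
  show card_fibre: "card {a \<in> index_lists k m \<times> distinct_index_lists k m. relabel_pattern a = l}
      = \<Prod>{k - m + 1 .. k}" if l: "l \<in> index_lists k m" for l
  proof -
    let ?d = "length (remdups l)"
    have "?d \<le> m" using l length_remdups_leq[of l] by (simp add: index_lists_def)
    have "card {a \<in> index_lists k m \<times> distinct_index_lists k m. relabel_pattern a = l}
        = card (distinct_index_lists k ?d) * \<Prod>{(k - ?d) - (m - ?d) + 1 .. k - ?d}"
      unfolding fibre card_cartesian_product card_same_pattern[OF l]
        card_distinct_index_lists_prefix[OF l assms(1)] ..
    also have "card (distinct_index_lists k ?d) = \<Prod>{k - ?d + 1 .. k}"
      using \<open>?d \<le> m\<close> assms(1) by (simp add: card_distinct_index_lists)
    finally show ?thesis using prod_split_interval[OF \<open>?d \<le> m\<close> assms(1)] by simp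
  qed
  show "relabel_pattern ` (index_lists k m \<times> distinct_index_lists k m) = index_lists k m"
  proof
    show "relabel_pattern ` (index_lists k m \<times> distinct_index_lists k m) \<subseteq> index_lists k m"
      using relabel_pattern_in_index_lists by blast
    show "index_lists k m \<subseteq> relabel_pattern ` (index_lists k m \<times> distinct_index_lists k m)"
    proof
      fix l assume l: "l \<in> index_lists k m"
      have "card {a \<in> index_lists k m \<times> distinct_index_lists k m. relabel_pattern a = l} \<noteq> 0"
        unfolding card_fibre[OF l] using assms by (simp add: prod_zero_iff)
      hence "{a \<in> index_lists k m \<times> distinct_index_lists k m. relabel_pattern a = l} \<noteq> {}"
        by (metis card.empty)
      thus "l \<in> relabel_pattern ` (index_lists k m \<times> distinct_index_lists k m)" by blast
    qed
  qed
qed simp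

definition resample_with_replacement :: "nat \<Rightarrow> nat multiset \<Rightarrow> nat multiset pmf" where
  "resample_with_replacement k = shuffle (\<lambda>c.
     map_pmf (\<lambda>j. mset (map ((!) c) (pattern j))) (pmf_of_set (index_lists k (length c))))"

lemma hypergeometric_resample_with_replacement:
  assumes "length xs = k" "m \<le> k" "k > 0"
  shows "bind_pmf (hypergeometric_sample xs m) (resample_with_replacement k) = multinomial_sample xs m"
proof -
  let ?I = "pmf_of_set (index_lists k m)" and ?D = "pmf_of_set (distinct_index_lists k m)"
  let ?g = "\<lambda>l. mset (map ((!) xs) l)"
  have "bind_pmf (hypergeometric_sample xs m) (resample_with_replacement k)
      = bind_pmf ?D (\<lambda>D. map_pmf (\<lambda>j. mset (map ((!) (map ((!) xs) D)) (pattern j)))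
          (pmf_of_set (index_lists k (length (map ((!) xs) D)))))"
    unfolding hypergeometric_sample_eq_distinct_index_lists[OF assms(2)[folded assms(1)]]
      resample_with_replacement_def assms(1)
    by (rule bind_shuffle_exchangeable)
       (use distinct_index_lists_not_empty[OF assms(2)] finite_distinct_index_lists[of k m]
         in \<open>auto simp: distinct_index_lists_def\<close>)
  also have "\<dots> = bind_pmf ?D (\<lambda>D. bind_pmf ?I (\<lambda>j. return_pmf (?g (relabel_pattern (j, D)))))"
  proof (rule bind_pmf_cong[OF refl])
    fix D assume "D \<in> set_pmf ?D"
    hence "D \<in> distinct_index_lists k m" using assms(2) by simp
    hence D: "length D = m" by (simp add: distinct_index_lists_def)
    show "map_pmf (\<lambda>j. mset (map ((!) (map ((!) xs) D)) (pattern j)))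
        (pmf_of_set (index_lists k (length (map ((!) xs) D))))
      = bind_pmf ?I (\<lambda>j. return_pmf (?g (relabel_pattern (j, D))))"
      unfolding map_pmf_def
    proof (rule bind_pmf_cong)
      fix j assume "j \<in> set_pmf ?I"
      hence "j \<in> index_lists k m" using assms(3) by simp
      hence "length (remdups j) \<le> m" using length_remdups_leq[of j] by (simp add: index_lists_def)
      hence "set (pattern j) \<subseteq> {..<length D}" using set_pattern[of j] D by auto
      thus "return_pmf (mset (map ((!) (map ((!) xs) D)) (pattern j)))
          = return_pmf (?g (relabel_pattern (j, D)))"
        by (auto simp: relabel_pattern_def intro!: image_mset_cong)
    qed (use D in simp)
  qed
  also have "\<dots> = map_pmf ?g (map_pmf relabel_pattern (pair_pmf ?I ?D))"
    by (subst bind_commute_pmf) (simp add: pair_pmf_def map_bind_pmf map_return_pmf)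
  also have "pair_pmf ?I ?D = pmf_of_set (index_lists k m \<times> distinct_index_lists k m)"
    by (rule pair_pmf_of_set)
       (use index_lists_not_empty[OF assms(3)] distinct_index_lists_not_empty[OF assms(2)] in auto)
  also have "map_pmf ?g (map_pmf relabel_pattern \<dots>) = multinomial_sample xs m"
  proof -
    have "xs \<noteq> []" using assms by auto
    thus ?thesis using assms by (simp add: relabel_pattern_uniform multinomial_sample_eq_index_lists)
  qed
  finally show ?thesis .
qed

section \<open>Bernoulli sampling as a binomial mixture\<close>

primrec bernoulli_subset :: "nat \<Rightarrow> real \<Rightarrow> nat set pmf" where
  "bernoulli_subset 0 p = return_pmf {}"
| "bernoulli_subset (Suc k) p = bind_pmf (bernoulli_pmf p)
     (\<lambda>b. map_pmf (\<lambda>S. if b then insert 0 (Suc ` S) else Suc ` S) (bernoulli_subset k p))"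

lemma set_pmf_bernoulli_subset: "S \<in> set_pmf (bernoulli_subset k p) \<Longrightarrow> S \<subseteq> {..<k}"
  by (induction k arbitrary: S) (auto split: if_splits)

lemma bernoulli_sample_eq_bernoulli_subset:
  "bernoulli_sample xs p = map_pmf (\<lambda>S. image_mset ((!) xs) (mset_set S)) (bernoulli_subset (length xs) p)"
proof (induction xs)
  case Nil thus ?case by simp
next
  case (Cons x xs)
  have shift: "image_mset ((!) (x # xs)) (mset_set (if b then insert 0 (Suc ` S) else Suc ` S))
      = (if b then add_mset x (image_mset ((!) xs) (mset_set S)) else image_mset ((!) xs) (mset_set S))"
    if "S \<in> set_pmf (bernoulli_subset (length xs) p)" for b S
  proof -
    have "finite S" using set_pmf_bernoulli_subset[OF that] finite_subset by blast
    moreover have "image_mset ((!) (x # xs)) (mset_set (Suc ` S)) = image_mset ((!) xs) (mset_set S)"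
      by (simp add: image_mset_mset_set[symmetric] multiset.map_comp o_def)
    ultimately show ?thesis by (auto simp: mset_set.insert)
  qed
  show ?case
    by (simp add: Cons.IH map_pmf_def bind_assoc_pmf bind_return_pmf shift cong: bind_pmf_cong)
qed

lemma nat_set_eq_shift:
  "S = (if 0 \<in> S then insert 0 (Suc ` {x. Suc x \<in> S}) else Suc ` {x. Suc x \<in> S})"
  by (auto simp: image_iff) (metis not0_implies_Suc)+

lemma pmf_map_image_Suc:
  "pmf (map_pmf (\<lambda>S. Suc ` S) M) S = (if 0 \<in> S then 0 else pmf M {x. Suc x \<in> S})"
proof (cases "0 \<in> S")
  case True
  hence "S \<notin> (\<lambda>S. Suc ` S) ` set_pmf M" by auto
  thus ?thesis using True by (simp add: pmf_map_outside)
next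
  case False
  hence "S = Suc ` {x. Suc x \<in> S}" using nat_set_eq_shift[of S] by simp
  moreover have "inj (\<lambda>S. Suc ` S)" by (simp add: inj_image_eq_iff inj_on_def)
  ultimately show ?thesis using False by (metis pmf_map_inj')
qed

lemma pmf_map_insert_0_image_Suc:
  "pmf (map_pmf (\<lambda>S. insert 0 (Suc ` S)) M) S = (if 0 \<in> S then pmf M {x. Suc x \<in> S} else 0)"
proof (cases "0 \<in> S")
  case True
  have "inj (\<lambda>S. insert 0 (Suc ` S))"
  proof (rule injI)
    fix A B assume eq: "insert 0 (Suc ` A) = insert 0 (Suc ` B)"
    show "A = B"
    proof (rule set_eqI)
      fix x
      have "Suc x \<in> insert 0 (Suc ` A) \<longleftrightarrow> Suc x \<in> insert 0 (Suc ` B)" by (simp only: eq)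
      thus "x \<in> A \<longleftrightarrow> x \<in> B" by auto
    qed
  qed
  hence "pmf (map_pmf (\<lambda>S. insert 0 (Suc ` S)) M) (insert 0 (Suc ` {x. Suc x \<in> S})) = pmf M {x. Suc x \<in> S}"
    by (rule pmf_map_inj')
  moreover have "S = insert 0 (Suc ` {x. Suc x \<in> S})" using True nat_set_eq_shift[of S] by simp
  ultimately show ?thesis using True by simp
next
  case False
  hence "S \<notin> (\<lambda>S. insert 0 (Suc ` S)) ` set_pmf M" by blast
  thus ?thesis using False by (simp add: pmf_map_outside)
qed

lemma pmf_bernoulli_subset:
  assumes "0 \<le> p" "p \<le> 1"
  shows "pmf (bernoulli_subset k p) S = (if S \<subseteq> {..<k} then p ^ card S * (1 - p) ^ (k - card S) else 0)"
proof (induction k arbitrary: S)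
  case 0
  thus ?case by (auto simp: indicator_def)
next
  case (Suc k)
  let ?T = "{x. Suc x \<in> S}"
  have "pmf (bernoulli_subset (Suc k) p) S
      = p * pmf (map_pmf (\<lambda>S. insert 0 (Suc ` S)) (bernoulli_subset k p)) S
        + (1 - p) * pmf (map_pmf (\<lambda>S. Suc ` S) (bernoulli_subset k p)) S"
    using assms by (simp add: pmf_bind)
  also have "\<dots> = (if 0 \<in> S then p else 1 - p) * pmf (bernoulli_subset k p) ?T"
    by (simp add: pmf_map_image_Suc pmf_map_insert_0_image_Suc)
  finally have step: "pmf (bernoulli_subset (Suc k) p) S
      = (if 0 \<in> S then p else 1 - p) * pmf (bernoulli_subset k p) ?T" .
  have subset_iff: "S \<subseteq> {..<Suc k} \<longleftrightarrow> ?T \<subseteq> {..<k}" by (subst (1) nat_set_eq_shift) auto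
  show ?case
  proof (cases "?T \<subseteq> {..<k}")
    case True
    hence "finite ?T" "card ?T \<le> k" using finite_subset card_mono[OF _ True] by auto
    have "card S = (if 0 \<in> S then Suc (card ?T) else card ?T)"
      by (subst (1) nat_set_eq_shift) (simp add: card_image \<open>finite ?T\<close>)
    thus ?thesis using True step subset_iff Suc.IH[of ?T] \<open>card ?T \<le> k\<close> by (simp add: Suc_diff_le)
  next
    case False
    thus ?thesis using step subset_iff Suc.IH[of ?T] by simp
  qed
qed

lemma le_of_in_set_pmf_binomial: "p \<in> {0..1} \<Longrightarrow> K \<in> set_pmf (binomial_pmf n p) \<Longrightarrow> K \<le> n"
  by (auto simp: set_pmf_binomial_eq split: if_splits)

lemma finite_subsets_card:
  "finite {S. S \<subseteq> {..<(k::nat)} \<and> card S = K}"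
  by (rule finite_subset[of _ "Pow {..<k}"]) auto

lemma subsets_card_not_empty:
  assumes "K \<le> k" shows "{S. S \<subseteq> {..<(k::nat)} \<and> card S = K} \<noteq> {}"
  using n_subsets[of "{..<k}" K] assms by (metis card.empty card_lessThan finite_lessThan zero_less_binomial
      less_irrefl)

lemma bernoulli_subset_binomial_mixture:
  assumes p: "0 \<le> p" "p \<le> 1"
  shows "bernoulli_subset k p = bind_pmf (binomial_pmf k p)
     (\<lambda>K. if K \<le> k then pmf_of_set {S. S \<subseteq> {..<k} \<and> card S = K} else return_pmf {})"
proof (rule pmf_eqI)
  fix S
  let ?f = "\<lambda>K. pmf (if K \<le> k then pmf_of_set {S. S \<subseteq> {..<k} \<and> card S = K} else return_pmf {}) S"
  have pmf_K: "?f K = (if S \<subseteq> {..<k} \<and> card S = K then 1 / real (k choose K) else 0)" if "K \<le> k" for K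
    using that subsets_card_not_empty[OF that] finite_subsets_card[of k K] n_subsets[of "{..<k}" K]
    by (simp add: indicator_def)
  have "pmf (bind_pmf (binomial_pmf k p) (\<lambda>K. if K \<le> k then pmf_of_set {S. S \<subseteq> {..<k} \<and> card S = K}
      else return_pmf {})) S = (\<integral>K. ?f K \<partial>measure_pmf (binomial_pmf k p))"
    by (simp add: pmf_bind)
  also have "\<dots> = (\<Sum>K\<in>(if S \<subseteq> {..<k} then {card S} else {}). ?f K * pmf (binomial_pmf k p) K)"
  proof (rule integral_measure_pmf_real)
    fix K assume K: "K \<in> set_pmf (binomial_pmf k p)" "?f K \<noteq> 0"
    have "K \<le> k" using le_of_in_set_pmf_binomial K(1) p by auto
    thus "K \<in> (if S \<subseteq> {..<k} then {card S} else {})" using K(2) pmf_K by (auto split: if_splits)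
  qed simp
  also have "\<dots> = pmf (bernoulli_subset k p) S"
  proof (cases "S \<subseteq> {..<k}")
    case True
    hence "card S \<le> k" by (metis card_lessThan card_mono finite_lessThan)
    thus ?thesis using True pmf_K p by (simp add: pmf_bernoulli_subset)
  next
    case False thus ?thesis using p by (simp add: pmf_bernoulli_subset)
  qed
  finally show "pmf (bernoulli_subset k p) S = pmf (bind_pmf (binomial_pmf k p) (\<lambda>K. if K \<le> k then
      pmf_of_set {S. S \<subseteq> {..<k} \<and> card S = K} else return_pmf {})) S" ..
qed

lemma bernoulli_sample_binomial_mixture:
  assumes "0 \<le> p" "p \<le> 1"
  shows "bernoulli_sample xs p = bind_pmf (binomial_pmf (length xs) p) (hypergeometric_sample xs)"
proof -
  have "bernoulli_sample xs p = bind_pmf (binomial_pmf (length xs) p) (\<lambda>K.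
      map_pmf (\<lambda>S. image_mset ((!) xs) (mset_set S)) (if K \<le> length xs
        then pmf_of_set {S. S \<subseteq> {..<length xs} \<and> card S = K} else return_pmf {}))"
    by (simp add: bernoulli_sample_eq_bernoulli_subset bernoulli_subset_binomial_mixture[OF assms]
        map_bind_pmf)
  also have "\<dots> = bind_pmf (binomial_pmf (length xs) p) (hypergeometric_sample xs)"
    by (rule bind_pmf_cong[OF refl])
       (use le_of_in_set_pmf_binomial assms in \<open>auto simp: hypergeometric_sample_def\<close>)
  finally show ?thesis .
qed

section \<open>Drawing an urn from an urn\<close>

text \<open>Reading a uniform word of length \<open>k\<close> at \<open>m\<close> fixed distinct positions yields a uniform word
  of length \<open>m\<close>: after a permutation of the positions it is a prefix.\<close>

lemma map_nth_distinct_positions_index_lists: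
  assumes D: "D \<in> distinct_index_lists k m" and "k' > 0"
  shows "map_pmf (\<lambda>u. map ((!) u) D) (pmf_of_set (index_lists k' k)) = pmf_of_set (index_lists k' m)"
proof -
  have D_props: "length D = m" "distinct D" "set D \<subseteq> {..<k}" using D by (auto simp: distinct_index_lists_def)
  have "m \<le> k" using D_props by (metis card_lessThan card_mono distinct_card finite_lessThan)
  define D' where "D' = D @ sorted_list_of_set ({..<k} - set D)"
  have "distinct D'" "set D' = {..<k}" using D_props by (auto simp: D'_def)
  hence "length D' = k" by (metis card_lessThan distinct_card)
  have "take m D' = D" using D_props by (simp add: D'_def)
  define \<sigma> where "\<sigma> = (\<lambda>i. if i < k then D' ! i else i)"
  have \<sigma>: "\<sigma> permutes {..<k}"
  proof (rule bij_imp_permutes)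
    have "bij_betw ((!) D') {..<k} {..<k}"
      by (rule bij_betw_nth) (use \<open>distinct D'\<close> \<open>set D' = {..<k}\<close> \<open>length D' = k\<close> in auto)
    thus "bij_betw \<sigma> {..<k} {..<k}" by (rule bij_betw_cong[THEN iffD1, rotated]) (simp add: \<sigma>_def)
  qed (simp add: \<sigma>_def)
  have select_eq_prefix: "map ((!) u) D = take m (permute_list \<sigma> u)" if "length u = k" for u :: "nat list"
  proof -
    have "permute_list \<sigma> u = map ((!) u) D'"
      unfolding permute_list_def using that \<open>length D' = k\<close> by (intro nth_equalityI) (auto simp: \<sigma>_def)
    thus ?thesis using \<open>take m D' = D\<close> by (metis take_map)
  qed
  have "map_pmf (\<lambda>u. map ((!) u) D) (pmf_of_set (index_lists k' k))
      = map_pmf (take m) (map_pmf (permute_list \<sigma>) (pmf_of_set (index_lists k' k)))"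
    unfolding pmf.map_comp o_def
  proof (rule map_pmf_cong[OF refl])
    fix u assume "u \<in> set_pmf (pmf_of_set (index_lists k' k))"
    hence "u \<in> index_lists k' k" using \<open>k' > 0\<close> by simp
    hence "length u = k" by (simp add: index_lists_def)
    thus "map ((!) u) D = take m (permute_list \<sigma> u)" by (rule select_eq_prefix)
  qed
  also have "map_pmf (permute_list \<sigma>) (pmf_of_set (index_lists k' k)) = pmf_of_set (index_lists k' k)"
    by (rule map_pmf_permute_list_pmf_of_set[OF finite_index_lists index_lists_not_empty[OF \<open>k' > 0\<close>]
        _ _ \<sigma>]) (auto simp: index_lists_def)
  also have "map_pmf (take m) (pmf_of_set (index_lists k' k)) = pmf_of_set (index_lists k' m)"
    by (rule map_take_index_lists[OF \<open>m \<le> k\<close> \<open>k' > 0\<close>])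
  finally show ?thesis .
qed

lemma hypergeometric_sample_of_random_urn:
  assumes "xs' \<noteq> []" "m \<le> k"
  shows "bind_pmf (pmf_of_set (index_lists (length xs') k)) (\<lambda>u. hypergeometric_sample (map ((!) xs') u) m)
       = multinomial_sample xs' m"
proof -
  let ?k' = "length xs'"
  have "?k' > 0" using assms by simp
  let ?I = "pmf_of_set (index_lists ?k' k)" and ?D = "pmf_of_set (distinct_index_lists k m)"
  let ?g = "\<lambda>l. mset (map ((!) xs') l)"
  have "bind_pmf ?I (\<lambda>u. hypergeometric_sample (map ((!) xs') u) m)
      = bind_pmf ?I (\<lambda>u. bind_pmf ?D (\<lambda>D. return_pmf (?g (map ((!) u) D))))"
  proof (rule bind_pmf_cong[OF refl])
    fix u assume "u \<in> set_pmf ?I"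
    hence "u \<in> index_lists ?k' k" using \<open>?k' > 0\<close> by simp
    hence u: "length u = k" by (simp add: index_lists_def)
    have "hypergeometric_sample (map ((!) xs') u) m = map_pmf (\<lambda>l. mset (map ((!) (map ((!) xs') u)) l)) ?D"
      using hypergeometric_sample_eq_distinct_index_lists[of m "map ((!) xs') u"] u assms by simp
    also have "\<dots> = bind_pmf ?D (\<lambda>D. return_pmf (?g (map ((!) u) D)))"
      unfolding map_pmf_def
      by (rule bind_pmf_cong[OF refl])
         (use u assms set_pmf_distinct_index_lists[OF assms(2)]
           in \<open>auto simp: distinct_index_lists_def intro!: image_mset_cong\<close>)
    finally show "hypergeometric_sample (map ((!) xs') u) m
        = bind_pmf ?D (\<lambda>D. return_pmf (?g (map ((!) u) D)))" .
  qed
  also have "\<dots> = bind_pmf ?D (\<lambda>D. map_pmf ?g (map_pmf (\<lambda>u. map ((!) u) D) ?I))"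
    by (subst bind_commute_pmf) (simp add: map_pmf_def bind_assoc_pmf bind_return_pmf multiset.map_comp)
  also have "\<dots> = bind_pmf ?D (\<lambda>D. map_pmf ?g (pmf_of_set (index_lists ?k' m)))"
    by (rule bind_pmf_cong[OF refl])
       (use assms \<open>?k' > 0\<close> in \<open>simp add: map_nth_distinct_positions_index_lists\<close>)
  also have "\<dots> = multinomial_sample xs' m"
    by (simp add: multinomial_sample_eq_index_lists[OF assms(1)])
  finally show ?thesis .
qed

lemma prob_index_lists_avoid:
  assumes "T \<subseteq> {..<k'}" "card T = \<Delta>" "k' > 0"
  shows "measure_pmf.prob (pmf_of_set (index_lists k' k)) {u. set u \<inter> T = {}}
    = (1 - real \<Delta> / real k') ^ k"
proof -
  have "finite T" "\<Delta> \<le> k'" using assms finite_subset card_mono[OF _ assms(1)] by auto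
  have "index_lists k' k \<inter> {u. set u \<inter> T = {}} = {l. set l \<subseteq> {..<k'} - T \<and> length l = k}"
    by (auto simp: index_lists_def)
  hence "card (index_lists k' k \<inter> {u. set u \<inter> T = {}}) = (k' - \<Delta>) ^ k"
    using card_lists_length_eq[of "{..<k'} - T" k] assms \<open>finite T\<close> by (simp add: card_Diff_subset)
  hence "measure_pmf.prob (pmf_of_set (index_lists k' k)) {u. set u \<inter> T = {}}
      = real ((k' - \<Delta>) ^ k) / real (k' ^ k)"
    using index_lists_not_empty[OF assms(3)] by (simp add: measure_pmf_of_set card_index_lists)
  also have "\<dots> = ((real k' - real \<Delta>) / real k') ^ k"
    using \<open>\<Delta> \<le> k'\<close> by (simp add: power_divide of_nat_diff)
  also have "(real k' - real \<Delta>) / real k' = 1 - real \<Delta> / real k'" using assms(3) by (simp add: field_simps)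
  finally show ?thesis .
qed

lemma missing_colours_avoid_positions:
  assumes "set u \<subseteq> {..<length xs'}"
    and "real \<Delta> \<le> real (num_colors xs') - real (num_colors (map ((!) xs') u))"
  obtains T where "T \<subseteq> {..<length xs'}" "card T = \<Delta>" "set u \<inter> T = {}"
proof -
  let ?C = "set (map ((!) xs') u)"
  have "?C \<subseteq> set xs'" using assms(1) by auto
  moreover have "real \<Delta> \<le> real (card (set xs')) - real (card ?C)"
    using assms(2) by (simp add: num_colors_def)
  ultimately have "\<Delta> \<le> card (set xs' - ?C)"
    using card_mono[of "set xs'" ?C] by (simp add: card_Diff_subset)
  then obtain M where M: "M \<subseteq> set xs' - ?C" "card M = \<Delta>" "finite M"
    by (rule obtain_subset_with_card_n)
  have "inj_on (first_index xs') M" by (rule inj_onI) (metis M(1) DiffD1 nth_first_index subsetD)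
  moreover have "set u \<inter> first_index xs' ` M = {}"
  proof (rule ccontr)
    assume "set u \<inter> first_index xs' ` M \<noteq> {}"
    then obtain c where c: "c \<in> M" "first_index xs' c \<in> set u" by auto
    hence "xs' ! first_index xs' c \<in> ?C" by auto
    moreover have "xs' ! first_index xs' c = c" using c(1) M(1) by (auto intro!: nth_first_index)
    ultimately show False using c(1) M(1) by auto
  qed
  ultimately show ?thesis
    using that[of "first_index xs' ` M"] M by (auto simp: card_image intro!: first_index_less_length)
qed

text \<open>Union bound over the \<open>\<Delta>\<close>-sets of positions the drawn urn may avoid.\<close>

lemma prob_random_urn_misses_colours:
  assumes "xs' \<noteq> []"
  shows "measure_pmf.prob (pmf_of_set (index_lists (length xs') k))
           {u. real \<Delta> \<le> real (num_colors xs') - real (num_colors (map ((!) xs') u))}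
         \<le> real (length xs' choose \<Delta>) * (1 - real \<Delta> / real (length xs')) ^ k"
proof -
  let ?k' = "length xs'"
  let ?I = "pmf_of_set (index_lists ?k' k)"
  let ?bad = "{u. real \<Delta> \<le> real (num_colors xs') - real (num_colors (map ((!) xs') u))}"
  let ?Fam = "{T. T \<subseteq> {..<?k'} \<and> card T = \<Delta>}"
  let ?E = "\<lambda>T. {u. set u \<inter> T = {}}"
  have "?k' > 0" using assms by simp
  have bad_subset: "?bad \<inter> set_pmf ?I \<subseteq> (\<Union>T\<in>?Fam. ?E T)"
  proof
    fix u assume u: "u \<in> ?bad \<inter> set_pmf ?I"
    hence "u \<in> index_lists ?k' k" using \<open>?k' > 0\<close> by simp
    hence "set u \<subseteq> {..<?k'}" by (simp add: index_lists_def)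
    moreover have "real \<Delta> \<le> real (num_colors xs') - real (num_colors (map ((!) xs') u))" using u by simp
    ultimately obtain T where "T \<in> ?Fam" "u \<in> ?E T" by (auto elim: missing_colours_avoid_positions)
    thus "u \<in> (\<Union>T\<in>?Fam. ?E T)" by blast
  qed
  have "finite ?Fam" by (rule finite_subset[of _ "Pow {..<?k'}"]) auto
  have "measure_pmf.prob ?I ?bad = measure_pmf.prob ?I (?bad \<inter> set_pmf ?I)"
    by (simp add: measure_Int_set_pmf)
  also have "\<dots> \<le> measure_pmf.prob ?I (\<Union>T\<in>?Fam. ?E T)"
    by (rule measure_pmf.finite_measure_mono[OF bad_subset]) simp
  also have "\<dots> \<le> (\<Sum>T\<in>?Fam. measure_pmf.prob ?I (?E T))"
    by (rule measure_UNION_le[OF \<open>finite ?Fam\<close>]) simp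
  also have "\<dots> = (\<Sum>T\<in>?Fam. (1 - real \<Delta> / real ?k') ^ k)"
    by (rule sum.cong) (use \<open>?k' > 0\<close> in \<open>auto simp: prob_index_lists_avoid\<close>)
  also have "\<dots> = real (?k' choose \<Delta>) * (1 - real \<Delta> / real ?k') ^ k"
    using n_subsets[of "{..<?k'}" \<Delta>] by simp
  finally show ?thesis .
qed

section \<open>Tail bounds for the sample size\<close>

lemma sums_exp_real: "(\<lambda>n. x ^ n / fact n) sums exp (x::real)"
  using exp_converges[of x] by (simp add: divide_inverse mult.commute)

lemma exp_series_tail_le:
  fixes l :: real
  assumes "0 \<le> l"
  shows "(\<Sum>n. l ^ (n + x) / fact (n + x)) \<le> exp (2 * l) / 2 ^ x"
proof -
  let ?a = "\<lambda>n. l ^ n / fact n"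
  let ?b = "\<lambda>n. (2 * l) ^ n / fact n / 2 ^ x"
  have "summable ?a" using sums_exp_real sums_summable by blast
  have b_sums: "?b sums (exp (2 * l) / 2 ^ x)" using sums_divide[OF sums_exp_real[of "2 * l"]] by simp
  hence "summable ?b" using sums_summable by blast
  have "(\<Sum>n. ?a (n + x)) \<le> (\<Sum>n. ?b (n + x))"
  proof (rule suminf_le)
    show "summable (\<lambda>n. ?a (n + x))" using \<open>summable ?a\<close> summable_iff_shift[of ?a x] by simp
    show "summable (\<lambda>n. ?b (n + x))" using \<open>summable ?b\<close> summable_iff_shift[of ?b x] by simp
    fix n
    have "?b (n + x) = 2 ^ n * (l ^ (n + x) / fact (n + x))"
      by (simp add: power_mult_distrib power_add)
    moreover have "l ^ (n + x) / fact (n + x) \<le> 2 ^ n * (l ^ (n + x) / fact (n + x))"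
    proof -
      have "0 \<le> l ^ (n + x) / fact (n + x)" using assms by simp
      moreover have "(1::real) \<le> 2 ^ n" by simp
      ultimately show ?thesis using mult_right_mono[of 1 "2 ^ n" "l ^ (n + x) / fact (n + x)"] by simp
    qed
    ultimately show "?a (n + x) \<le> ?b (n + x)" by simp
  qed
  also have "\<dots> \<le> suminf ?b"
  proof -
    have "suminf ?b = (\<Sum>n. ?b (n + x)) + (\<Sum>j<x. ?b j)"
      by (rule suminf_split_initial_segment[OF \<open>summable ?b\<close>])
    moreover have "(\<Sum>j<x. ?b j) \<ge> 0" using assms by (intro sum_nonneg) simp
    ultimately show ?thesis by simp
  qed
  also have "suminf ?b = exp (2 * l) / 2 ^ x" using sums_unique[OF b_sums] by simp
  finally show ?thesis .
qed

text \<open>Both tails are Chernoff bounds, at \<open>E[2^N] = exp l\<close> and \<open>E[2^-N] = exp (- l / 2)\<close>.\<close>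

lemma poi_upper_tail:
  assumes "l \<ge> 0"
  shows "measure_pmf.prob (poi l) {N. x \<le> N} \<le> exp l / 2 ^ x"
proof (cases "l = 0")
  case True
  thus ?thesis by (cases x) (auto simp: poi_def indicator_def)
next
  case False
  hence "l > 0" using assms by simp
  let ?a = "\<lambda>n. l ^ n / fact n"
  have "summable ?a" using sums_exp_real sums_summable by blast
  have "{N. x \<le> N} = UNIV - {..<x}" by auto
  hence "measure_pmf.prob (poi l) {N. x \<le> N} = 1 - measure_pmf.prob (poi l) {..<x}"
    using measure_pmf.prob_compl[of "{..<x}" "poi l"] by simp
  also have "measure_pmf.prob (poi l) {..<x} = exp (- l) * (\<Sum>j<x. ?a j)"
    using \<open>l > 0\<close> by (simp add: poi_def measure_measure_pmf_finite sum_distrib_left field_simps)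
  also have "(\<Sum>j<x. ?a j) = exp l - (\<Sum>n. ?a (n + x))"
    using suminf_split_initial_segment[OF \<open>summable ?a\<close>, of x] sums_unique[OF sums_exp_real[of l]]
    by simp
  also have "1 - exp (- l) * (exp l - (\<Sum>n. ?a (n + x))) = exp (- l) * (\<Sum>n. ?a (n + x))"
  proof -
    have "exp (- l) * exp l = 1" by (simp add: exp_minus_inverse mult.commute)
    thus ?thesis by (simp add: right_diff_distrib)
  qed
  also have "\<dots> \<le> exp (- l) * (exp (2 * l) / 2 ^ x)"
    by (rule mult_left_mono[OF exp_series_tail_le[OF assms]]) simp
  also have "\<dots> = exp l / 2 ^ x" by (simp add: exp_add[symmetric])
  finally show ?thesis .
qed

lemma poi_lower_tail:
  assumes "l \<ge> 0"
  shows "measure_pmf.prob (poi l) {N. N < m} \<le> 2 ^ m * exp (- l / 2)"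
proof (cases "l = 0")
  case True
  thus ?thesis using one_le_power[of "2::real" m] by (cases m) (auto simp: poi_def indicator_def)
next
  case False
  hence lp: "l > 0" using assms by simp
  let ?c = "\<lambda>n. (l / 2) ^ n / fact n"
  have sc: "summable ?c" using sums_exp_real sums_summable by blast
  have "measure_pmf.prob (poi l) {N. N < m} = (\<Sum>j<m. l ^ j / fact j * exp (- l))"
    using lp by (simp add: poi_def measure_measure_pmf_finite lessThan_def[symmetric])
  also have "\<dots> \<le> (\<Sum>j<m. 2 ^ m * exp (- l) * ?c j)"
  proof (rule sum_mono)
    fix j assume "j \<in> {..<m}"
    hence "(2::real) ^ j \<le> 2 ^ m" by (intro power_increasing) auto
    hence "l ^ j \<le> 2 ^ m * (l / 2) ^ j"
      using lp by (simp add: power_divide field_simps)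
    hence "l ^ j * exp (- l) / fact j \<le> 2 ^ m * (l / 2) ^ j * exp (- l) / fact j"
      by (intro divide_right_mono mult_right_mono) auto
    moreover have "l ^ j / fact j * exp (- l) = l ^ j * exp (- l) / fact j" by simp
    moreover have "2 ^ m * exp (- l) * ?c j = 2 ^ m * (l / 2) ^ j * exp (- l) / fact j" by simp
    ultimately show "l ^ j / fact j * exp (- l) \<le> 2 ^ m * exp (- l) * ?c j" by linarith
  qed
  also have "\<dots> = 2 ^ m * exp (- l) * (\<Sum>j<m. ?c j)" by (simp add: sum_distrib_left)
  also have "(\<Sum>j<m. ?c j) \<le> suminf ?c"
    by (rule sum_le_suminf[OF sc]) (use lp in auto)
  hence "2 ^ m * exp (- l) * (\<Sum>j<m. ?c j) \<le> 2 ^ m * exp (- l) * suminf ?c"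
    by (intro mult_left_mono) auto
  also have "suminf ?c = exp (l / 2)" using sums_unique[OF sums_exp_real[of "l/2"]] by simp
  also have "2 ^ m * exp (- l) * exp (l / 2) = 2 ^ m * exp (- l / 2)"
    by (simp add: exp_add[symmetric])
  finally show ?thesis .
qed

lemma prob_le_sum_weights:
  assumes "set_pmf M \<subseteq> B" "finite B" "\<And>j. j \<in> B \<Longrightarrow> 0 \<le> w j" "\<And>j. j \<in> A \<Longrightarrow> j \<in> B \<Longrightarrow> 1 \<le> w j"
  shows "measure_pmf.prob M A \<le> (\<Sum>j\<in>B. pmf M j * w j)"
proof -
  have "measure_pmf.prob M A = measure_pmf.prob M (A \<inter> set_pmf M)" by (simp add: measure_Int_set_pmf)
  also have "\<dots> \<le> measure_pmf.prob M (A \<inter> B)"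
    by (rule measure_pmf.finite_measure_mono) (use assms(1) in auto)
  also have "\<dots> = (\<Sum>j\<in>A \<inter> B. pmf M j)" using assms(2) by (simp add: measure_measure_pmf_finite)
  also have "\<dots> \<le> (\<Sum>j\<in>A \<inter> B. pmf M j * w j)"
  proof (rule sum_mono)
    fix j assume "j \<in> A \<inter> B"
    hence "1 \<le> w j" using assms(4) by auto
    thus "pmf M j \<le> pmf M j * w j" using mult_left_mono[of 1 "w j" "pmf M j"] by simp
  qed
  also have "\<dots> \<le> (\<Sum>j\<in>B. pmf M j * w j)"
    by (rule sum_mono2) (use assms(2,3) in auto)
  finally show ?thesis .
qed

lemma binomial_upper_tail:
  assumes p: "0 \<le> p" "p \<le> 1"
  shows "measure_pmf.prob (binomial_pmf k p) {K. x \<le> K} \<le> exp (real k * p) / 2 ^ x"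
proof -
  have "measure_pmf.prob (binomial_pmf k p) {K. x \<le> K} \<le> (\<Sum>j\<in>{..k}. pmf (binomial_pmf k p) j * (2 ^ j / 2 ^ x))"
  proof (rule prob_le_sum_weights)
    show "set_pmf (binomial_pmf k p) \<subseteq> {..k}" using le_of_in_set_pmf_binomial[of p] p by auto
    fix j assume "j \<in> {K. x \<le> K}"
    thus "1 \<le> (2::real) ^ j / 2 ^ x" by (simp add: power_increasing)
  qed auto
  also have "\<dots> = (\<Sum>j\<le>k. real (k choose j) * (2 * p) ^ j * (1 - p) ^ (k - j)) / 2 ^ x"
    using p by (simp add: sum_divide_distrib power_mult_distrib field_simps)
  also have "(\<Sum>j\<le>k. real (k choose j) * (2 * p) ^ j * (1 - p) ^ (k - j)) = (2 * p + (1 - p)) ^ k"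
    by (rule binomial_ring[symmetric])
  also have "(2 * p + (1 - p)) ^ k = (1 + p) ^ k" by (simp add: add.commute)
  also have "(1 + p) ^ k \<le> exp p ^ k" by (rule power_mono) (use p in auto)
  also have "exp p ^ k = exp (real k * p)" by (simp add: exp_of_nat_mult)
  finally show ?thesis by (simp add: divide_right_mono)
qed

lemma binomial_lower_tail:
  assumes p: "0 \<le> p" "p \<le> 1"
  shows "measure_pmf.prob (binomial_pmf k p) {K. K < m} \<le> 2 ^ m * exp (- (real k * p) / 2)"
proof -
  have "measure_pmf.prob (binomial_pmf k p) {K. K < m} \<le> (\<Sum>j\<in>{..k}. pmf (binomial_pmf k p) j * (2 ^ m * (1 / 2) ^ j))"
  proof (rule prob_le_sum_weights)
    show "set_pmf (binomial_pmf k p) \<subseteq> {..k}" using le_of_in_set_pmf_binomial[of p] p by auto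
    fix j assume "j \<in> {K. K < m}"
    hence "(2::real) ^ j \<le> 2 ^ m" by (intro power_increasing) auto
    thus "1 \<le> (2::real) ^ m * (1 / 2) ^ j" by (simp add: power_one_over field_simps)
  qed auto
  also have "\<dots> = 2 ^ m * (\<Sum>j\<le>k. real (k choose j) * (p / 2) ^ j * (1 - p) ^ (k - j))"
    using p by (simp add: sum_distrib_left power_mult_distrib field_simps)
  also have "(\<Sum>j\<le>k. real (k choose j) * (p / 2) ^ j * (1 - p) ^ (k - j)) = (p / 2 + (1 - p)) ^ k"
    by (rule binomial_ring[symmetric])
  also have "(p / 2 + (1 - p)) ^ k \<le> exp (- p / 2) ^ k"
    by (rule power_mono) (use p exp_ge_add_one_self[of "- p / 2"] in auto)
  also have "exp (- p / 2) ^ k = exp (- (real k * p) / 2)" by (simp add: exp_of_nat_mult[symmetric])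
  finally show ?thesis by simp
qed

lemma exp_div_two_power_floor_le:
  assumes l: "l < n + (real (nat \<lfloor>2 * n\<rfloor> + 1) - 2 * n) * ln 2"
  shows "exp l / 2 ^ (nat \<lfloor>2 * n\<rfloor> + 1) \<le> (exp 1 / 4) powr n"
proof -
  let ?M = "real (nat \<lfloor>2 * n\<rfloor> + 1)"
  have "exp l \<le> exp (n + (?M - 2 * n) * ln 2)" using l by simp
  also have "\<dots> = exp n * 2 powr (?M - 2 * n)" by (simp add: exp_add powr_def mult.commute)
  also have "2 powr (?M - 2 * n) = 2 powr ?M / 2 powr (2 * n)" by (simp add: powr_diff)
  also have "2 powr ?M = 2 ^ (nat \<lfloor>2 * n\<rfloor> + 1)" by (subst powr_realpow[symmetric]) auto
  finally have "exp l / 2 ^ (nat \<lfloor>2 * n\<rfloor> + 1) \<le> exp n / 2 powr (2 * n)"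
    by (simp add: field_simps)
  also have "2 powr (2 * n) = 4 powr n" by (simp add: powr_powr[symmetric])
  also have "exp n / 4 powr n = (exp 1 / 4) powr n"
  proof -
    have "(exp 1 / 4) powr n = exp 1 powr n / 4 powr n" by (rule powr_divide)
    moreover have "exp 1 powr n = exp n" by (simp add: powr_def)
    ultimately show ?thesis by simp
  qed
  finally show ?thesis .
qed

lemma two_power_exp_neg_le:
  assumes "real m \<le> n"
  shows "2 ^ m * exp (- n) \<le> (2 / exp 1) powr n"
proof -
  have "(2::real) ^ m = 2 powr (real m)" by (simp add: powr_realpow)
  also have "\<dots> \<le> 2 powr n" using assms by simp
  finally have "2 ^ m * exp (- n) \<le> 2 powr n * exp (- n)" by simp
  also have "2 powr n * exp (- n) = (2 / exp 1) powr n"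
  proof -
    have "(2 / exp 1) powr n = 2 powr n / exp 1 powr n" by (rule powr_divide)
    moreover have "exp 1 powr n = exp n" by (simp add: powr_def)
    ultimately show ?thesis by (simp add: exp_minus field_simps)
  qed
  finally show ?thesis .
qed

section \<open>Simulating one sampling model by another\<close>

lemma admits_estimator_nonneg: "admits_estimator s k \<Delta> \<delta> \<Longrightarrow> 0 \<le> \<delta>"
  unfolding admits_estimator_def by (metis length_replicate measure_nonneg order_trans)

lemma admits_estimator_mono:
  "admits_estimator s k \<Delta> \<delta> \<Longrightarrow> \<delta> \<le> \<delta>' \<Longrightarrow> admits_estimator s k \<Delta> \<delta>'"
  unfolding admits_estimator_def by (meson order_trans)

text \<open>With \<open>\<Delta> = 0\<close> the error event is certain.\<close>

lemma admits_estimator_Delta_0: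
  assumes "admits_estimator s k 0 \<delta>" shows "1 \<le> \<delta>"
proof -
  obtain est where est: "\<And>xs. length xs = k \<Longrightarrow>
      measure_pmf.prob (bind_pmf (s xs) est) {c. real 0 \<le> \<bar>c - real (num_colors xs)\<bar>} \<le> \<delta>"
    using assms unfolding admits_estimator_def by blast
  have "{c. real 0 \<le> \<bar>c - real (num_colors (replicate k 0))\<bar>} = UNIV" by auto
  thus ?thesis using est[of "replicate k 0"] by simp
qed

lemma admits_estimator_if_sample_is_urn:
  assumes "\<And>xs. length xs = k \<Longrightarrow> s xs = return_pmf (mset xs)"
    and "0 \<le> \<delta>" and "\<Delta> = 0 \<Longrightarrow> 1 \<le> \<delta>"
  shows "admits_estimator s k \<Delta> \<delta>"
  unfolding admits_estimator_def
proof (intro exI[of _ "\<lambda>S. return_pmf (real (card (set_mset S)))"] allI impI)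
  fix xs :: "nat list" assume "length xs = k"
  thus "measure_pmf.prob (bind_pmf (s xs) (\<lambda>S. return_pmf (real (card (set_mset S)))))
          {c. real \<Delta> \<le> \<bar>c - real (num_colors xs)\<bar>} \<le> \<delta>"
    using assms by (cases "\<Delta> = 0") (auto simp: num_colors_def indicator_def bind_return_pmf)
qed

lemma admits_estimator_empty_urn:
  assumes "admits_estimator s 0 \<Delta> \<delta>" "s [] = return_pmf {#}" "s' [] = return_pmf {#}"
  shows "admits_estimator s' 0 \<Delta> \<delta>"
  by (rule admits_estimator_if_sample_is_urn)
     (use assms in \<open>auto dest: admits_estimator_nonneg admits_estimator_Delta_0\<close>)

lemma admits_estimator_exact_simulation:
  assumes "admits_estimator s2 k \<Delta> \<delta>" "\<And>xs. length xs = k \<Longrightarrow> bind_pmf (s1 xs) K = s2 xs"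
  shows "admits_estimator s1 k \<Delta> \<delta>"
proof -
  obtain est where est: "\<And>xs. length xs = k \<Longrightarrow>
      measure_pmf.prob (bind_pmf (s2 xs) est) {c. real \<Delta> \<le> \<bar>c - real (num_colors xs)\<bar>} \<le> \<delta>"
    using assms(1) unfolding admits_estimator_def by blast
  have "bind_pmf (s1 xs) (\<lambda>S. bind_pmf (K S) est) = bind_pmf (s2 xs) est" if "length xs = k" for xs
    using assms(2)[OF that] by (simp only: bind_assoc_pmf[symmetric])
  thus ?thesis unfolding admits_estimator_def using est by (intro exI[of _ "\<lambda>S. bind_pmf (K S) est"]) simp
qed

lemma measure_pmf_prob_bind_pmf:
  "measure_pmf.prob (bind_pmf N f) A = (\<integral>x. measure_pmf.prob (f x) A \<partial>measure_pmf N)"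
  unfolding bind_pmf.rep_eq
  by (auto simp: measure_pmf.measure_bind[where N="count_space UNIV"] measure_subprob measure_nonneg
           intro!: measure_pmf.integrable_const_bound[where B=1])

lemma measure_pmf_prob_bind_pmf_le:
  assumes "0 \<le> \<delta>" "\<And>x. x \<in> set_pmf M \<Longrightarrow> x \<notin> B \<Longrightarrow> measure_pmf.prob (f x) E \<le> \<delta>"
  shows "measure_pmf.prob (bind_pmf M f) E \<le> \<delta> + measure_pmf.prob M B"
proof -
  have "measure_pmf.prob (bind_pmf M f) E = (\<integral>x. measure_pmf.prob (f x) E \<partial>measure_pmf M)"
    by (rule measure_pmf_prob_bind_pmf)
  also have "\<dots> \<le> (\<integral>x. \<delta> + indicator B x \<partial>measure_pmf M)"
  proof (rule integral_mono_AE)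
    show "integrable (measure_pmf M) (\<lambda>x. measure_pmf.prob (f x) E)"
      by (rule measure_pmf.integrable_const_bound[where B=1]) auto
    show "integrable (measure_pmf M) (\<lambda>x. \<delta> + indicator B x)"
      by (rule measure_pmf.integrable_const_bound[where B="\<delta> + 1"])
         (use assms(1) in \<open>auto simp: indicator_def\<close>)
    show "AE x in measure_pmf M. measure_pmf.prob (f x) E \<le> \<delta> + indicator B x"
    proof (rule AE_pmfI)
      fix x assume x: "x \<in> set_pmf M"
      show "measure_pmf.prob (f x) E \<le> \<delta> + indicator B x"
      proof (cases "x \<in> B")
        case True
        have "measure_pmf.prob (f x) E \<le> 1" by (rule measure_pmf.prob_le_1)
        moreover have "indicator B x = (1::real)" using True by simp
        ultimately show ?thesis using assms(1) by linarith
      next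
        case False
        thus ?thesis using assms(2)[OF x] by simp
      qed
    qed
  qed
  also have "\<dots> = \<delta> + measure_pmf.prob M B"
    by (subst Bochner_Integration.integral_add) (auto intro!: measure_pmf.integrable_const_bound[where B=1])
  finally show ?thesis .
qed

text \<open>The kernel \<open>K\<close> simulates a sample of another model or reports failure (\<open>None\<close>),
  in which case the estimate is an arbitrary \<open>0\<close>.\<close>

definition estimator_via :: "(nat multiset \<Rightarrow> real pmf) \<Rightarrow> (nat multiset \<Rightarrow> nat multiset option pmf)
    \<Rightarrow> nat multiset \<Rightarrow> real pmf" where
  "estimator_via est K S = bind_pmf (K S) (\<lambda>oS. case oS of Some S' \<Rightarrow> est S' | None \<Rightarrow> return_pmf 0)"

lemma bind_estimator_via:
  assumes "bind_pmf S K = bind_pmf Q (\<lambda>N. if N \<in> G then map_pmf Some (T N) else return_pmf None)"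
  shows "bind_pmf S (estimator_via est K)
    = bind_pmf Q (\<lambda>N. if N \<in> G then bind_pmf (T N) est else return_pmf 0)"
proof -
  have "bind_pmf S (estimator_via est K)
      = bind_pmf (bind_pmf S K) (\<lambda>oS. case oS of Some S' \<Rightarrow> est S' | None \<Rightarrow> return_pmf 0)"
    by (simp add: estimator_via_def[abs_def] bind_assoc_pmf)
  also have "\<dots> = bind_pmf Q (\<lambda>N. if N \<in> G then bind_pmf (T N) est else return_pmf 0)"
    unfolding assms bind_assoc_pmf
    by (rule bind_pmf_cong[OF refl]) (simp add: bind_map_pmf bind_return_pmf)
  finally show ?thesis .
qed

lemma admits_estimator_simulation:
  assumes adm: "admits_estimator s2 k \<Delta> \<delta>"
    and simulate: "\<And>xs. length xs = k \<Longrightarrow> bind_pmf (s1 xs) K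
        = bind_pmf Q (\<lambda>N. if N \<in> G then map_pmf Some (T xs N) else return_pmf None)"
    and mixture: "\<And>xs. length xs = k \<Longrightarrow> s2 xs = bind_pmf Q (T xs)"
    and failure: "measure_pmf.prob Q (- G) \<le> \<epsilon>"
  shows "admits_estimator s1 k \<Delta> (\<delta> + \<epsilon>)"
proof -
  obtain est where est: "\<And>xs. length xs = k \<Longrightarrow>
      measure_pmf.prob (bind_pmf (s2 xs) est) {c. real \<Delta> \<le> \<bar>c - real (num_colors xs)\<bar>} \<le> \<delta>"
    using adm unfolding admits_estimator_def by blast
  show ?thesis unfolding admits_estimator_def
  proof (intro exI[of _ "estimator_via est K"] allI impI)
    fix xs :: "nat list" assume len: "length xs = k"
    let ?E = "{c. real \<Delta> \<le> \<bar>c - real (num_colors xs)\<bar>}"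
    let ?g = "\<lambda>N. measure_pmf.prob (bind_pmf (T xs N) est) ?E"
    let ?h = "\<lambda>N. if N \<in> G then ?g N else measure_pmf.prob (return_pmf (0::real)) ?E"
    have "measure_pmf.prob (bind_pmf (s1 xs) (estimator_via est K)) ?E
        = (\<integral>N. ?h N \<partial>measure_pmf Q)"
      unfolding bind_estimator_via[OF simulate[OF len]] measure_pmf_prob_bind_pmf[of Q]
      by (rule Bochner_Integration.integral_cong) auto
    also have "\<dots> \<le> (\<integral>N. ?g N + indicator (- G) N \<partial>measure_pmf Q)"
    proof (rule integral_mono)
      show "integrable (measure_pmf Q) ?h"
        by (rule measure_pmf.integrable_const_bound[where B=1]) auto
      show "integrable (measure_pmf Q) (\<lambda>N. ?g N + indicator (- G) N)"
        by (rule measure_pmf.integrable_const_bound[where B=2])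
           (auto intro!: order.trans[OF abs_triangle_ineq] add_mono order.trans[OF measure_pmf.prob_le_1]
            simp: indicator_def)
      show "?h N \<le> ?g N + indicator (- G) N" for N
        by (auto simp: indicator_def)
    qed
    also have "\<dots> = (\<integral>N. ?g N \<partial>measure_pmf Q) + measure_pmf.prob Q (- G)"
      by (subst Bochner_Integration.integral_add)
         (auto intro!: measure_pmf.integrable_const_bound[where B=1])
    also have "(\<integral>N. ?g N \<partial>measure_pmf Q) = measure_pmf.prob (bind_pmf (s2 xs) est) ?E"
      by (simp add: mixture[OF len] measure_pmf_prob_bind_pmf bind_assoc_pmf)
    finally show "measure_pmf.prob (bind_pmf (s1 xs) (estimator_via est K)) ?E \<le> \<delta> + \<epsilon>"
      using est[OF len] failure by linarith
  qed
qed

text \<open>Thinning: a fixed-size sample is turned into a sample of random size \<open>N \<sim> Q\<close> when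
  \<open>N \<le> m\<close>, and a sample of random size is cut down to size \<open>m\<close> when \<open>N \<ge> m\<close>.\<close>

lemma admits_estimator_fixed_size_of_mixture:
  assumes adm: "admits_estimator s k \<Delta> \<delta>"
    and mixture: "\<And>xs. length xs = k \<Longrightarrow> s xs = bind_pmf Q (samp xs)"
    and thin: "\<And>xs N. length xs = k \<Longrightarrow> N \<in> set_pmf Q \<Longrightarrow> N \<le> m \<Longrightarrow>
      bind_pmf (samp xs m) (subsample N) = samp xs N"
  shows "admits_estimator (\<lambda>xs. samp xs m) k \<Delta> (\<delta> + measure_pmf.prob Q (- {N. N \<le> m}))"
proof (rule admits_estimator_simulation[OF adm, where Q=Q and T=samp and G="{N. N \<le> m}"
      and K="\<lambda>S. bind_pmf Q (\<lambda>N. if N \<le> m then map_pmf Some (subsample N S) else return_pmf None)"])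
  fix xs :: "nat list" assume len: "length xs = k"
  show "bind_pmf (samp xs m)
        (\<lambda>S. bind_pmf Q (\<lambda>N. if N \<le> m then map_pmf Some (subsample N S) else return_pmf None))
      = bind_pmf Q (\<lambda>N. if N \<in> {N. N \<le> m} then map_pmf Some (samp xs N) else return_pmf None)"
    by (subst bind_commute_pmf, rule bind_pmf_cong[OF refl])
       (auto simp: map_bind_pmf[symmetric] thin[OF len])
qed (simp_all add: mixture)

lemma admits_estimator_mixture_of_fixed_size:
  assumes adm: "admits_estimator (\<lambda>xs. samp xs m) k \<Delta> \<delta>"
    and mixture: "\<And>xs. length xs = k \<Longrightarrow> s xs = bind_pmf Q (samp xs)"
    and thin: "\<And>xs N. length xs = k \<Longrightarrow> N \<in> set_pmf Q \<Longrightarrow> m \<le> N \<Longrightarrow>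
      bind_pmf (samp xs N) (subsample m) = samp xs m"
    and size: "\<And>xs N S. length xs = k \<Longrightarrow> N \<in> set_pmf Q \<Longrightarrow> S \<in> set_pmf (samp xs N) \<Longrightarrow> size S = N"
  shows "admits_estimator s k \<Delta> (\<delta> + measure_pmf.prob Q (- {N. m \<le> N}))"
proof (rule admits_estimator_simulation[OF adm, where Q=Q and G="{N. m \<le> N}" and T="\<lambda>xs N. samp xs m"
      and K="\<lambda>S. if m \<le> size S then map_pmf Some (subsample m S) else return_pmf None"])
  fix xs :: "nat list" assume len: "length xs = k"
  have "bind_pmf (samp xs N) (\<lambda>S. if m \<le> size S then map_pmf Some (subsample m S) else return_pmf None)
      = (if N \<in> {N. m \<le> N} then map_pmf Some (samp xs m) else return_pmf None)"
    if "N \<in> set_pmf Q" for N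
  proof -
    have "bind_pmf (samp xs N) (\<lambda>S. if m \<le> size S then map_pmf Some (subsample m S) else return_pmf None)
        = bind_pmf (samp xs N) (\<lambda>S. if m \<le> N then map_pmf Some (subsample m S) else return_pmf None)"
      by (rule bind_pmf_cong[OF refl]) (simp add: size[OF len that])
    also have "\<dots> = (if N \<in> {N. m \<le> N} then map_pmf Some (samp xs m) else return_pmf None)"
      by (auto simp: map_bind_pmf[symmetric] thin[OF len that])
    finally show ?thesis .
  qed
  thus "bind_pmf (s xs) (\<lambda>S. if m \<le> size S then map_pmf Some (subsample m S) else return_pmf None)
      = bind_pmf Q (\<lambda>N. if N \<in> {N. m \<le> N} then map_pmf Some (samp xs m) else return_pmf None)"
    by (simp add: mixture[OF len] bind_assoc_pmf cong: bind_pmf_cong)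
qed simp_all

lemma admits_hypergeometric_of_multinomial:
  assumes "admits_estimator (\<lambda>xs. multinomial_sample xs m) k \<Delta> \<delta>" "m \<le> k" "k > 0"
  shows "admits_estimator (\<lambda>xs. hypergeometric_sample xs m) k \<Delta> \<delta>"
  by (rule admits_estimator_exact_simulation[OF assms(1)])
     (rule hypergeometric_resample_with_replacement[OF _ assms(2,3)])

lemma admits_multinomial_of_poisson:
  assumes "admits_estimator (\<lambda>xs. poisson_sample xs l) k \<Delta> \<delta>" "k > 0"
  shows "admits_estimator (\<lambda>xs. multinomial_sample xs m) k \<Delta> (\<delta> + measure_pmf.prob (poi l) (- {N. N \<le> m}))"
  by (rule admits_estimator_fixed_size_of_mixture[where samp=multinomial_sample and m=m, OF assms(1)])
     (use assms(2) in \<open>auto simp: poisson_sample_def multinomial_subsample\<close>)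

lemma admits_poisson_of_multinomial:
  assumes "admits_estimator (\<lambda>xs. multinomial_sample xs m) k \<Delta> \<delta>" "k > 0"
  shows "admits_estimator (\<lambda>xs. poisson_sample xs l) k \<Delta> (\<delta> + measure_pmf.prob (poi l) (- {N. m \<le> N}))"
  by (rule admits_estimator_mixture_of_fixed_size[where samp=multinomial_sample and m=m, OF assms(1)])
     (use assms(2) in \<open>auto simp: poisson_sample_def multinomial_subsample size_multinomial_sample\<close>)

lemma admits_hypergeometric_of_bernoulli:
  assumes "admits_estimator (\<lambda>xs. bernoulli_sample xs p) k \<Delta> \<delta>" "0 \<le> p" "p \<le> 1" "m \<le> k"
  shows "admits_estimator (\<lambda>xs. hypergeometric_sample xs m) k \<Delta>
    (\<delta> + measure_pmf.prob (binomial_pmf k p) (- {K. K \<le> m}))"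
  by (rule admits_estimator_fixed_size_of_mixture[where samp=hypergeometric_sample and m=m, OF assms(1)])
     (use assms in \<open>auto simp: bernoulli_sample_binomial_mixture hypergeometric_subsample\<close>)

lemma admits_bernoulli_of_hypergeometric:
  assumes "admits_estimator (\<lambda>xs. hypergeometric_sample xs m) k \<Delta> \<delta>" "0 \<le> p" "p \<le> 1"
  shows "admits_estimator (\<lambda>xs. bernoulli_sample xs p) k \<Delta>
    (\<delta> + measure_pmf.prob (binomial_pmf k p) (- {K. m \<le> K}))"
proof (rule admits_estimator_mixture_of_fixed_size[where samp=hypergeometric_sample and m=m, OF assms(1)])
  fix xs :: "nat list" and K assume "length xs = k" "K \<in> set_pmf (binomial_pmf k p)"
  hence "K \<le> length xs" using le_of_in_set_pmf_binomial assms(2,3) by auto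
  thus "m \<le> K \<Longrightarrow> bind_pmf (hypergeometric_sample xs K) (subsample m) = hypergeometric_sample xs m"
    and "S \<in> set_pmf (hypergeometric_sample xs K) \<Longrightarrow> size S = K" for S
    by (simp_all add: hypergeometric_subsample size_hypergeometric_sample)
qed (use assms in \<open>simp add: bernoulli_sample_binomial_mixture\<close>)

lemma num_colors_map_nth_le:
  assumes "set u \<subseteq> {..<length xs}"
  shows "num_colors (map ((!) xs) u) \<le> num_colors xs"
  unfolding num_colors_def by (rule card_mono) (use assms in auto)

lemma admits_multinomial_of_hypergeometric_larger_urn:
  assumes adm: "admits_estimator (\<lambda>xs. hypergeometric_sample xs m) k \<Delta> \<delta>" and "m \<le> k" "k' > 0"
  shows "admits_estimator (\<lambda>xs. multinomial_sample xs m) k' (2 * \<Delta>)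
           (\<delta> + real (k' choose \<Delta>) * (1 - real \<Delta> / real k') ^ k)"
proof -
  obtain est where est: "\<And>xs. length xs = k \<Longrightarrow>
      measure_pmf.prob (bind_pmf (hypergeometric_sample xs m) est) {c. real \<Delta> \<le> \<bar>c - real (num_colors xs)\<bar>} \<le> \<delta>"
    using adm unfolding admits_estimator_def by blast
  show ?thesis unfolding admits_estimator_def
  proof (intro exI[of _ est] allI impI)
    fix xs' :: "nat list" assume len: "length xs' = k'"
    hence "xs' \<noteq> []" using \<open>k' > 0\<close> by auto
    let ?I = "pmf_of_set (index_lists k' k)"
    let ?E = "{c. real (2 * \<Delta>) \<le> \<bar>c - real (num_colors xs')\<bar>}"
    let ?bad = "{u. real \<Delta> \<le> real (num_colors xs') - real (num_colors (map ((!) xs') u))}"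
    have "multinomial_sample xs' m = bind_pmf ?I (\<lambda>u. hypergeometric_sample (map ((!) xs') u) m)"
      using hypergeometric_sample_of_random_urn[OF \<open>xs' \<noteq> []\<close> \<open>m \<le> k\<close>] len by simp
    hence "bind_pmf (multinomial_sample xs' m) est
        = bind_pmf ?I (\<lambda>u. bind_pmf (hypergeometric_sample (map ((!) xs') u) m) est)"
      by (simp only: bind_assoc_pmf)
    also have "measure_pmf.prob \<dots> ?E \<le> \<delta> + measure_pmf.prob ?I ?bad"
    proof (rule measure_pmf_prob_bind_pmf_le)
      show "0 \<le> \<delta>" by (rule admits_estimator_nonneg[OF adm])
      fix u assume "u \<in> set_pmf ?I" "u \<notin> ?bad"
      hence "u \<in> index_lists k' k" using \<open>k' > 0\<close> by simp
      hence u: "set u \<subseteq> {..<k'}" "length u = k" by (auto simp: index_lists_def)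
      let ?U = "map ((!) xs') u"
      have "num_colors ?U \<le> num_colors xs'" using num_colors_map_nth_le[of u xs'] u len by simp
      hence "?E \<subseteq> {c. real \<Delta> \<le> \<bar>c - real (num_colors ?U)\<bar>}" using \<open>u \<notin> ?bad\<close> by auto
      hence "measure_pmf.prob (bind_pmf (hypergeometric_sample ?U m) est) ?E
          \<le> measure_pmf.prob (bind_pmf (hypergeometric_sample ?U m) est) {c. real \<Delta> \<le> \<bar>c - real (num_colors ?U)\<bar>}"
        by (rule measure_pmf.finite_measure_mono) simp
      also have "\<dots> \<le> \<delta>" by (rule est) (simp add: u)
      finally show "measure_pmf.prob (bind_pmf (hypergeometric_sample ?U m) est) ?E \<le> \<delta>" .
    qed
    also have "measure_pmf.prob ?I ?bad \<le> real (k' choose \<Delta>) * (1 - real \<Delta> / real k') ^ k"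
      using prob_random_urn_misses_colours[OF \<open>xs' \<noteq> []\<close>, of k \<Delta>] len by simp
    finally show "measure_pmf.prob (bind_pmf (multinomial_sample xs' m) est) ?E
        \<le> \<delta> + real (k' choose \<Delta>) * (1 - real \<Delta> / real k') ^ k" by simp
  qed
qed

lemma INF_of_nat_le_ereal_obtain:
  assumes "(INF m\<in>S. ereal (real m)) \<le> ereal n"
  obtains m where "m \<in> S" "real m \<le> n"
proof (cases "S = {}")
  case True thus ?thesis using assms by (simp add: top_ereal_def)
next
  case False
  define m0 where "m0 = (LEAST m. m \<in> S)"
  have "m0 \<in> S" using False unfolding m0_def by (metis LeastI ex_in_conv)
  have "ereal (real m0) \<le> (INF m\<in>S. ereal (real m))"
    by (rule INF_greatest) (simp add: m0_def Least_le)
  hence "ereal (real m0) \<le> ereal n" using assms by (rule order_trans)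
  thus ?thesis using \<open>m0 \<in> S\<close> that by auto
qed

lemma INF_ereal_le_obtain_less:
  assumes "(INF x\<in>S. ereal (f x)) \<le> ereal n" "\<eta> > 0"
  obtains x where "x \<in> S" "f x < n + \<eta>"
proof -
  have "(INF x\<in>S. ereal (f x)) < ereal (n + \<eta>)" using assms by (simp add: order.strict_trans1)
  then obtain x where "x \<in> S" "ereal (f x) < ereal (n + \<eta>)" by (auto simp: INF_less_iff)
  thus ?thesis using that by auto
qed

lemma INF_nonneg_le_ereal_imp_nonneg:
  assumes "(INF x\<in>S. ereal (f x)) \<le> ereal n" "\<And>x. x \<in> S \<Longrightarrow> 0 \<le> f x"
  shows "0 \<le> n"
proof -
  have "ereal 0 \<le> (INF x\<in>S. ereal (f x))" by (rule INF_greatest) (use assms(2) in simp)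
  thus "0 \<le> n" using assms(1) by (metis ereal_less_eq(3) order_trans)
qed

text \<open>The slack \<open>(\<lfloor>2 n\<rfloor> + 1 - 2 n) ln 2\<close> above the infimum is what the Chernoff bound at the
  integer threshold \<open>\<lfloor>2 n\<rfloor> + 1\<close> can absorb.\<close>

lemma INF_le_obtain_upper_tail_bound:
  assumes "(INF x\<in>S. ereal (f x)) \<le> ereal n" "\<And>x. x \<in> S \<Longrightarrow> 0 \<le> f x"
  obtains x where "x \<in> S" "exp (f x) / 2 ^ (nat \<lfloor>2 * n\<rfloor> + 1) \<le> (exp 1 / 4) powr n"
proof -
  have "0 \<le> n" by (rule INF_nonneg_le_ereal_imp_nonneg[OF assms])
  hence "2 * n < real (nat \<lfloor>2 * n\<rfloor> + 1)" by linarith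
  hence "(real (nat \<lfloor>2 * n\<rfloor> + 1) - 2 * n) * ln 2 > 0" by simp
  then obtain x where "x \<in> S" "f x < n + (real (nat \<lfloor>2 * n\<rfloor> + 1) - 2 * n) * ln 2"
    using INF_ereal_le_obtain_less[OF assms(1)] by blast
  thus ?thesis using that exp_div_two_power_floor_le by blast
qed

lemma nstar_M_le: "admits_estimator (\<lambda>xs. multinomial_sample xs m) k \<Delta> \<delta> \<Longrightarrow> nstar_M k \<Delta> \<delta> \<le> real m"
  unfolding nstar_M_def by (rule INF_lower) simp

lemma nstar_H_le:
  "m \<le> k \<Longrightarrow> admits_estimator (\<lambda>xs. hypergeometric_sample xs m) k \<Delta> \<delta> \<Longrightarrow> nstar_H k \<Delta> \<delta> \<le> real m"
  unfolding nstar_H_def by (rule INF_lower) simp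

lemma nstar_B_le:
  "0 \<le> p \<Longrightarrow> p \<le> 1 \<Longrightarrow> admits_estimator (\<lambda>xs. bernoulli_sample xs p) k \<Delta> \<delta>
    \<Longrightarrow> nstar_B k \<Delta> \<delta> \<le> real k * p"
  unfolding nstar_B_def by (rule INF_lower) simp

lemma nstar_P_le:
  "0 \<le> l \<Longrightarrow> admits_estimator (\<lambda>xs. poisson_sample xs l) k \<Delta> \<delta> \<Longrightarrow> nstar_P k \<Delta> \<delta> \<le> l"
  unfolding nstar_P_def by (rule INF_lower) simp

text \<open>If \<open>m > k\<close>, drawing all \<open>k\<close> balls without replacement reveals the urn.\<close>

lemma nstar_H_le_nstar_M: "nstar_H k \<Delta> \<delta> \<le> nstar_M k \<Delta> \<delta>"
  unfolding nstar_M_def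
proof (rule INF_greatest, clarify)
  fix m assume adm: "admits_estimator (\<lambda>xs. multinomial_sample xs m) k \<Delta> \<delta>"
  consider "k = 0" | "0 < k" "m \<le> k" | "k < m" by linarith
  thus "nstar_H k \<Delta> \<delta> \<le> real m"
  proof cases
    case 1
    hence "admits_estimator (\<lambda>xs. hypergeometric_sample xs 0) k \<Delta> \<delta>"
      using admits_estimator_empty_urn[of "\<lambda>xs. multinomial_sample xs m" \<Delta> \<delta>] adm
      by (simp add: samples_of_empty_urn)
    hence "nstar_H k \<Delta> \<delta> \<le> real 0" using 1 by (intro nstar_H_le) simp_all
    thus ?thesis by (simp add: order_trans)
  next
    case 2
    thus ?thesis using nstar_H_le admits_hypergeometric_of_multinomial[OF adm] by simp
  next
    case 3
    have "admits_estimator (\<lambda>xs. hypergeometric_sample xs k) k \<Delta> \<delta>"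
      by (rule admits_estimator_if_sample_is_urn)
         (use hypergeometric_sample_all admits_estimator_nonneg[OF adm] admits_estimator_Delta_0 adm
           in auto)
    hence "nstar_H k \<Delta> \<delta> \<le> real k" by (rule nstar_H_le[OF order.refl])
    also have "real k \<le> real m" using 3 by simp
    finally show ?thesis by simp
  qed
qed

lemma nstar_M_larger_urn_le_nstar_H:
  assumes "nstar_H k \<Delta> \<delta> \<le> ereal n"
  shows "nstar_M k' (2 * \<Delta>) (\<delta> + real (k' choose \<Delta>) * (1 - real \<Delta> / real k') ^ k) \<le> ereal n"
proof -
  obtain m where "m \<le> k" and adm: "admits_estimator (\<lambda>xs. hypergeometric_sample xs m) k \<Delta> \<delta>"
    and "real m \<le> n"
    using INF_of_nat_le_ereal_obtain[OF assms[unfolded nstar_H_def]] by auto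
  have "admits_estimator (\<lambda>xs. multinomial_sample xs m) k' (2 * \<Delta>)
      (\<delta> + real (k' choose \<Delta>) * (1 - real \<Delta> / real k') ^ k)"
  proof (cases "k' = 0")
    case False
    thus ?thesis using admits_multinomial_of_hypergeometric_larger_urn[OF adm \<open>m \<le> k\<close>] by simp
  next
    case True
    thus ?thesis using admits_estimator_nonneg[OF adm]
      by (intro admits_estimator_if_sample_is_urn) (auto simp: samples_of_empty_urn)
  qed
  hence "nstar_M k' (2 * \<Delta>) (\<delta> + real (k' choose \<Delta>) * (1 - real \<Delta> / real k') ^ k) \<le> real m"
    by (rule nstar_M_le)
  also have "real m \<le> n" by fact
  finally show ?thesis by simp
qed

lemma nstar_M_le_nstar_P:
  assumes "nstar_P k \<Delta> \<delta> \<le> ereal n"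
  shows "nstar_M k \<Delta> (\<delta> + (exp 1 / 4) powr n) \<le> ereal (2 * n)"
proof -
  let ?S = "{l::real. 0 \<le> l \<and> admits_estimator (\<lambda>xs. poisson_sample xs l) k \<Delta> \<delta>}"
  have INF_le: "(INF l\<in>?S. ereal l) \<le> ereal n" using assms by (simp add: nstar_P_def)
  have "0 \<le> n" by (rule INF_nonneg_le_ereal_imp_nonneg[OF INF_le]) simp
  define m where "m = nat \<lfloor>2 * n\<rfloor>"
  obtain l where "0 \<le> l" and adm: "admits_estimator (\<lambda>xs. poisson_sample xs l) k \<Delta> \<delta>"
    and tail: "exp l / 2 ^ (m + 1) \<le> (exp 1 / 4) powr n"
    using INF_le_obtain_upper_tail_bound[OF INF_le] unfolding m_def by auto
  have "admits_estimator (\<lambda>xs. multinomial_sample xs m) k \<Delta> (\<delta> + (exp 1 / 4) powr n)"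
  proof (cases "k = 0")
    case True
    hence "admits_estimator (\<lambda>xs. multinomial_sample xs m) k \<Delta> \<delta>"
      using admits_estimator_empty_urn[of "\<lambda>xs. poisson_sample xs l" \<Delta> \<delta>] adm
      by (simp add: samples_of_empty_urn)
    thus ?thesis by (rule admits_estimator_mono) simp
  next
    case False
    have "- {N. N \<le> m} = {N. m + 1 \<le> N}" by auto
    hence "measure_pmf.prob (poi l) (- {N. N \<le> m}) \<le> (exp 1 / 4) powr n"
      using poi_upper_tail[OF \<open>0 \<le> l\<close>, of "m + 1"] tail by simp
    thus ?thesis using admits_multinomial_of_poisson[OF adm] False
      by (meson add_left_mono admits_estimator_mono not_gr0)
  qed
  hence "nstar_M k \<Delta> (\<delta> + (exp 1 / 4) powr n) \<le> real m" by (rule nstar_M_le)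
  also have "real m \<le> 2 * n" using \<open>0 \<le> n\<close> by (simp add: m_def)
  finally show ?thesis by simp
qed

lemma nstar_P_le_nstar_M:
  assumes "nstar_M k \<Delta> \<delta> \<le> ereal n"
  shows "nstar_P k \<Delta> (\<delta> + (2 / exp 1) powr n) \<le> ereal (2 * n)"
proof -
  obtain m where adm: "admits_estimator (\<lambda>xs. multinomial_sample xs m) k \<Delta> \<delta>" and "real m \<le> n"
    using INF_of_nat_le_ereal_obtain[OF assms[unfolded nstar_M_def]] by auto
  hence "0 \<le> n" by linarith
  have "admits_estimator (\<lambda>xs. poisson_sample xs (2 * n)) k \<Delta> (\<delta> + (2 / exp 1) powr n)"
  proof (cases "k = 0")
    case True
    hence "admits_estimator (\<lambda>xs. poisson_sample xs (2 * n)) k \<Delta> \<delta>"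
      using admits_estimator_empty_urn[of "\<lambda>xs. multinomial_sample xs m" \<Delta> \<delta>] adm
      by (simp add: samples_of_empty_urn)
    thus ?thesis by (rule admits_estimator_mono) simp
  next
    case False
    have "- {N. m \<le> N} = {N. N < m}" by auto
    hence "measure_pmf.prob (poi (2 * n)) (- {N. m \<le> N}) \<le> 2 ^ m * exp (- n)"
      using poi_lower_tail[of "2 * n" m] \<open>0 \<le> n\<close> by simp
    also have "\<dots> \<le> (2 / exp 1) powr n" by (rule two_power_exp_neg_le[OF \<open>real m \<le> n\<close>])
    finally show ?thesis using admits_poisson_of_multinomial[OF adm] False
      by (meson add_left_mono admits_estimator_mono not_gr0)
  qed
  thus ?thesis using nstar_P_le \<open>0 \<le> n\<close> by simp
qed

lemma nstar_H_le_nstar_B: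
  assumes "nstar_B k \<Delta> \<delta> \<le> ereal n"
  shows "nstar_H k \<Delta> (\<delta> + (exp 1 / 4) powr n) \<le> ereal (2 * n)"
proof -
  let ?S = "{p::real. 0 \<le> p \<and> p \<le> 1 \<and> admits_estimator (\<lambda>xs. bernoulli_sample xs p) k \<Delta> \<delta>}"
  have INF_le: "(INF p\<in>?S. ereal (real k * p)) \<le> ereal n" using assms by (simp add: nstar_B_def)
  have "0 \<le> n" by (rule INF_nonneg_le_ereal_imp_nonneg[OF INF_le]) simp
  define m where "m = nat \<lfloor>2 * n\<rfloor>"
  obtain p where p: "0 \<le> p" "p \<le> 1" and adm: "admits_estimator (\<lambda>xs. bernoulli_sample xs p) k \<Delta> \<delta>"
    and tail: "exp (real k * p) / 2 ^ (m + 1) \<le> (exp 1 / 4) powr n"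
    using INF_le_obtain_upper_tail_bound[OF INF_le] unfolding m_def by auto
  have "admits_estimator (\<lambda>xs. hypergeometric_sample xs (min k m)) k \<Delta> (\<delta> + (exp 1 / 4) powr n)"
  proof (cases "k = 0")
    case True
    hence "admits_estimator (\<lambda>xs. hypergeometric_sample xs (min k m)) k \<Delta> \<delta>"
      using admits_estimator_empty_urn[of "\<lambda>xs. bernoulli_sample xs p" \<Delta> \<delta>] adm
      by (simp add: samples_of_empty_urn)
    thus ?thesis by (rule admits_estimator_mono) simp
  next
    case False
    have "measure_pmf.prob (binomial_pmf k p) (- {K. K \<le> min k m}) \<le> (exp 1 / 4) powr n"
    proof (cases "m \<le> k")
      case True
      have "- {K. K \<le> min k m} = {K. m + 1 \<le> K}" using True by auto
      thus ?thesis using binomial_upper_tail[OF p, of k "m + 1"] tail by simp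
    next
      case False
      hence "set_pmf (binomial_pmf k p) \<inter> - {K. K \<le> min k m} = {}"
        using le_of_in_set_pmf_binomial[of p _ k] p by auto
      thus ?thesis by (simp add: measure_pmf_zero_iff[THEN iffD2])
    qed
    thus ?thesis using admits_hypergeometric_of_bernoulli[OF adm p] by (meson add_left_mono
        admits_estimator_mono min.cobounded1)
  qed
  hence "nstar_H k \<Delta> (\<delta> + (exp 1 / 4) powr n) \<le> real (min k m)" by (intro nstar_H_le) simp
  also have "real (min k m) \<le> real m" by simp
  also have "real m \<le> 2 * n" using \<open>0 \<le> n\<close> by (simp add: m_def)
  finally show ?thesis by simp
qed

lemma nstar_B_le_nstar_H:
  assumes "nstar_H k \<Delta> \<delta> \<le> ereal n"
  shows "nstar_B k \<Delta> (\<delta> + (2 / exp 1) powr n) \<le> ereal (2 * n)"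
proof -
  obtain m where "m \<le> k" and adm: "admits_estimator (\<lambda>xs. hypergeometric_sample xs m) k \<Delta> \<delta>"
    and "real m \<le> n"
    using INF_of_nat_le_ereal_obtain[OF assms[unfolded nstar_H_def]] by auto
  hence "0 \<le> n" by linarith
  define p where "p = (if k = 0 then 0 else min 1 (2 * n / real k))"
  have p: "0 \<le> p" "p \<le> 1" using \<open>0 \<le> n\<close> by (auto simp: p_def)
  have "real k * p \<le> 2 * n" using \<open>0 \<le> n\<close> by (auto simp: p_def min_def field_simps)
  have "admits_estimator (\<lambda>xs. bernoulli_sample xs p) k \<Delta> (\<delta> + (2 / exp 1) powr n)"
  proof (cases "k = 0")
    case True
    hence "admits_estimator (\<lambda>xs. bernoulli_sample xs p) k \<Delta> \<delta>"
      using admits_estimator_empty_urn[of "\<lambda>xs. hypergeometric_sample xs m" \<Delta> \<delta>] adm \<open>m \<le> k\<close>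
      by (simp add: samples_of_empty_urn)
    thus ?thesis by (rule admits_estimator_mono) simp
  next
    case False
    have "measure_pmf.prob (binomial_pmf k p) (- {K. m \<le> K}) \<le> (2 / exp 1) powr n"
    proof (cases "real k \<le> 2 * n")
      case True
      \<comment> \<open>then \<open>p = 1\<close> and all \<open>k \<ge> m\<close> balls are observed\<close>
      hence "p = 1" using False by (simp add: p_def)
      hence "set_pmf (binomial_pmf k p) \<inter> - {K. m \<le> K} = {}" using \<open>m \<le> k\<close> by auto
      thus ?thesis by (simp add: measure_pmf_zero_iff[THEN iffD2])
    next
      case False
      hence "real k * p = 2 * n" using \<open>k \<noteq> 0\<close> by (simp add: p_def)
      have "- {K. m \<le> K} = {K. K < m}" by auto
      hence "measure_pmf.prob (binomial_pmf k p) (- {K. m \<le> K}) \<le> 2 ^ m * exp (- n)"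
        using binomial_lower_tail[OF p, of k m] \<open>real k * p = 2 * n\<close> by simp
      also have "\<dots> \<le> (2 / exp 1) powr n" by (rule two_power_exp_neg_le[OF \<open>real m \<le> n\<close>])
      finally show ?thesis .
    qed
    thus ?thesis using admits_bernoulli_of_hypergeometric[OF adm p]
      by (meson add_left_mono admits_estimator_mono)
  qed
  hence "nstar_B k \<Delta> (\<delta> + (2 / exp 1) powr n) \<le> real k * p" by (rule nstar_B_le[OF p])
  also have "real k * p \<le> 2 * n" by fact
  finally show ?thesis by simp
qed

theorem corollary1:
  fixes k \<Delta> :: nat and \<delta> n :: real
  shows "nstar_H k \<Delta> \<delta> \<le> nstar_M k \<Delta> \<delta>
    \<and> (nstar_H k \<Delta> \<delta> \<le> ereal n \<longrightarrow>
         (\<forall>k'::nat. nstar_M k' (2 * \<Delta>)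
            (\<delta> + real (k' choose \<Delta>) * (1 - real \<Delta> / real k') ^ k) \<le> ereal n))
    \<and> (nstar_P k \<Delta> \<delta> \<le> ereal n \<longrightarrow> nstar_M k \<Delta> (\<delta> + (exp 1 / 4) powr n) \<le> ereal (2 * n))
    \<and> (nstar_M k \<Delta> \<delta> \<le> ereal n \<longrightarrow> nstar_P k \<Delta> (\<delta> + (2 / exp 1) powr n) \<le> ereal (2 * n))
    \<and> (nstar_B k \<Delta> \<delta> \<le> ereal n \<longrightarrow> nstar_H k \<Delta> (\<delta> + (exp 1 / 4) powr n) \<le> ereal (2 * n))
    \<and> (nstar_H k \<Delta> \<delta> \<le> ereal n \<longrightarrow> nstar_B k \<Delta> (\<delta> + (2 / exp 1) powr n) \<le> ereal (2 * n))"
  by (intro conjI impI allI nstar_H_le_nstar_M nstar_M_larger_urn_le_nstar_H nstar_M_le_nstar_P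
      nstar_P_le_nstar_M nstar_H_le_nstar_B nstar_B_le_nstar_H)

end
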